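(* Let $q=p^e$ with $p$ an odd prime and $e\ge2$ even. Let $f\in\mathcal{RF}$ with $\varepsilon$ the sign of its Walsh transform. Let $\beta$ be a generator of $\mathbb{F}_q^*$, let $d_1,\dots,d_q$ be the elements of $\mathbb{F}_q$ with $d_q=0$, and let $G_2$ be the $(e+2)\times q$ matrix with first row $(1,\dots,1)$, second row $(f(d_1)+1,\dots,f(d_q)+1)$, and $(i+3)$-th row $(\mathrm{Tr}_{q/p}(\beta^id_1),\dots,\mathrm{Tr}_{q/p}(\beta^id_q))$ for $0\le i\le e-1$. Let $\mathcal{C}_f'$ be the $p$-ary code generated by $G_2'=[I_{e+2}:G_2]$. If $\varepsilon(\eta_0(-1))^{e/2}=1$, then $\mathcal{C}_f'$ has parameters $[p^e+e+2,\ e+2,\ p^e-p^{e-1}-(p-1)p^{\frac e2-1}+2]$; if $\varepsilon(\eta_0(-1))^{e/2}=-1$, then $\mathcal{C}_f'$ has parameters $[p^e+e+2,\ e+2,\ p^e-p^{e-1}-p^{\frac e2-1}+1]$. Moreover, $\mathcal{C}_f'^{\perp}$ has parameters $[p^e+e+2,\ p^e,\ 3]$ and is at least almost optimal according to the sphere-packing bound.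
   Context: $\zeta_p=e^{2\pi i/p}$; $\mathrm{Tr}_{q/p}$ is the trace map from $\mathbb{F}_q$ to $\mathbb{F}_p$; $\eta_0$ is the quadratic character of $\mathbb{F}_p$; $p^*=(-1)^{(p-1)/2}p$ with $\sqrt{p^*}=\sqrt p$ if $p\equiv1\pmod 4$ and $\sqrt{-1}\sqrt p$ otherwise. Walsh transform of $f:\mathbb{F}_{p^e}\to\mathbb{F}_p$: $W_f(\beta)=\sum_x\zeta_p^{f(x)-\mathrm{Tr}_{p^e/p}(\beta x)}$; $f$ is weakly regular bent with sign $\varepsilon\in\{\pm1\}$ and dual $f^*:\mathbb{F}_{p^e}\to\mathbb{F}_p$ if $W_f(\beta)=\varepsilon\sqrt{p^*}^e\zeta_p^{f^*(\beta)}$ for all $\beta$. $\mathcal{RF}$ is the set of weakly regular bent $f$ with $f(0)=0$ and $f(ax)=a^hf(x)$ for all $a\in\mathbb{F}_p^*$, $x$, for some positive even $h$ with $\gcd(h-1,p-1)=1$. $G_2$ generates $\{(af(x)+\mathrm{Tr}_{q/p}(bx)+c)_{x\in\mathbb{F}_q}:a,c\in\mathbb{F}_p,b\in\mathbb{F}_q\}$. "At least almost optimal according to the sphere-packing bound" means the sphere-packing bound rules out a code with the same length and dimension and minimum distance $d+2$ (so the code is optimal or almost optimal). *)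

theory Defs
  imports Complex_Main "HOL-Number_Theory.Number_Theory"
begin

text \<open>The finite field F_q is modelled by a finite field type 'a with CARD('a) = p^e;
  F_p is its prime subfield, the image of the naturals.\<close>

definition Fp :: "'a::field set" where
  "Fp = range of_nat"

definition toZ :: "'a::field \<Rightarrow> nat" where
  "toZ y = (LEAST k. of_nat k = y)"

definition zeta :: "nat \<Rightarrow> complex" where
  "zeta p = cis (2 * pi / real p)"

definition tr :: "nat \<Rightarrow> nat \<Rightarrow> 'a::field \<Rightarrow> 'a" where
  "tr p e x = (\<Sum>i<e. x ^ (p ^ i))"

definition walsh :: "nat \<Rightarrow> nat \<Rightarrow> ('a::{finite,field} \<Rightarrow> 'a) \<Rightarrow> 'a \<Rightarrow> complex" where
  "walsh p e f b = (\<Sum>x\<in>UNIV. zeta p ^ toZ (f x - tr p e (b * x)))"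

definition sqrt_pstar :: "nat \<Rightarrow> complex" where
  "sqrt_pstar p = (if p mod 4 = 1 then complex_of_real (sqrt (real p))
                   else \<i> * complex_of_real (sqrt (real p)))"

definition weakly_regular_bent ::
  "nat \<Rightarrow> nat \<Rightarrow> ('a::{finite,field} \<Rightarrow> 'a) \<Rightarrow> int \<Rightarrow> ('a \<Rightarrow> 'a) \<Rightarrow> bool" where
  "weakly_regular_bent p e f \<epsilon> fstar \<longleftrightarrow>
     (\<forall>x. f x \<in> Fp) \<and> (\<forall>x. fstar x \<in> Fp) \<and> (\<epsilon> = 1 \<or> \<epsilon> = -1) \<and>
     (\<forall>b. walsh p e f b = of_int \<epsilon> * sqrt_pstar p ^ e * zeta p ^ toZ (fstar b))"

definition in_RF :: "nat \<Rightarrow> nat \<Rightarrow> ('a::{finite,field} \<Rightarrow> 'a) \<Rightarrow> bool" where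
  "in_RF p e f \<longleftrightarrow>
     (\<exists>\<epsilon> fstar. weakly_regular_bent p e f \<epsilon> fstar) \<and> f 0 = 0 \<and>
     (\<exists>h::nat. h > 0 \<and> even h \<and> gcd (h - 1) (p - 1) = 1 \<and>
        (\<forall>a\<in>Fp - {0}. \<forall>x. f (a * x) = a ^ h * f x))"

text \<open>Codewords of length n: functions nat => 'a vanishing outside {0..<n}.\<close>
definition hweight :: "nat \<Rightarrow> (nat \<Rightarrow> 'a::zero) \<Rightarrow> nat" where
  "hweight n c = card {i. i < n \<and> c i \<noteq> 0}"

definition row_code :: "nat \<Rightarrow> nat \<Rightarrow> (nat \<Rightarrow> nat \<Rightarrow> 'a::field) \<Rightarrow> (nat \<Rightarrow> 'a) set" where
  "row_code m n G = {(\<lambda>j. if j < n then (\<Sum>r<m. a r * G r j) else 0) | a. \<forall>r<m. a r \<in> Fp}"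

definition dual_code :: "nat \<Rightarrow> (nat \<Rightarrow> 'a::field) set \<Rightarrow> (nat \<Rightarrow> 'a) set" where
  "dual_code n C = {v. (\<forall>j<n. v j \<in> Fp) \<and> (\<forall>j\<ge>n. v j = 0) \<and>
                        (\<forall>c\<in>C. (\<Sum>j<n. v j * c j) = 0)}"

definition code_params :: "nat \<Rightarrow> (nat \<Rightarrow> 'a::field) set \<Rightarrow> nat \<Rightarrow> nat \<Rightarrow> nat \<Rightarrow> bool" where
  "code_params p C n k d \<longleftrightarrow>
     (\<forall>c\<in>C. (\<forall>j<n. c j \<in> Fp) \<and> (\<forall>j\<ge>n. c j = 0)) \<and>
     card C = p ^ k \<and>
     d = Min (hweight n ` (C - {\<lambda>_. 0}))"

definition sphere_packing_rules_out :: "nat \<Rightarrow> nat \<Rightarrow> nat \<Rightarrow> nat \<Rightarrow> bool" where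
  "sphere_packing_rules_out p n k d \<longleftrightarrow>
     p ^ k * (\<Sum>i\<le>(d - 1) div 2. (n choose i) * (p - 1) ^ i) > p ^ n"

text \<open>The generator matrix G_2' = [I_{e+2} : G_2] (0-based rows and columns).
  d enumerates F_q by positions 0..q-1 (so d_j of the paper is d (j-1)).\<close>
definition G2' :: "nat \<Rightarrow> nat \<Rightarrow> ('a::field \<Rightarrow> 'a) \<Rightarrow> 'a \<Rightarrow> (nat \<Rightarrow> 'a) \<Rightarrow> nat \<Rightarrow> nat \<Rightarrow> 'a" where
  "G2' p e f \<beta> d r c =
     (if c < e + 2 then (if r = c then 1 else 0)
      else if c < p ^ e + e + 2 then
        (let x = d (c - (e + 2)) in
          if r = 0 then 1 else if r = 1 then f x + 1 else tr p e (\<beta> ^ (r - 2) * x))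
      else 0)"

end

theory Submission
  imports Defs "HOL-Computational_Algebra.Polynomial_Factorial" "HOL-Library.FuncSet"
begin

(* Grouping the Walsh transform of f at b by the values of f x - Tr(b x) gives an integer
   relation between the p-th roots of unity; as the cyclotomic polynomial of index p is
   irreducible, such a relation is trivial, which pins down the size of every level set:
   p^(e-1) + s p^(e/2-1) (p [j = f*(b)] - 1), where s = \<epsilon> \<eta>\<^sub>0(-1)^(e/2) is walsh_sign below.
   A codeword of C_f' with message (a0, a1, b) has weight #{nonzero message entries} +
   #{x. a0 + a1 (f x + 1) + Tr(b x) \<noteq> 0}. For a1 \<noteq> 0 the zeros form such a level set,
   for a1 = 0 an affine hyperplane or nothing; comparing the cases gives the minimum distance,
   attained by f or f + 1 because f*(0) = 0 (the nonzero zeros of the homogeneous f come in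
   orbits of size p - 1). A dual codeword of weight at most 2 would give a zero column or two
   proportional columns of G2'; this is excluded by the nondegeneracy of the trace form, and
   the column of x = 0, which is e_0 + e_1, gives a dual codeword of weight 3. *)

section \<open>The cyclotomic polynomial of prime index\<close>

definition geometric_poly :: "nat \<Rightarrow> int poly" where
  "geometric_poly n = (\<Sum>k<n. monom 1 k)"

lemma coeff_geometric_poly: "coeff (geometric_poly n) k = (if k < n then 1 else 0)"
  by (simp add: geometric_poly_def coeff_sum coeff_monom)

lemma degree_geometric_poly: "n \<ge> 1 \<Longrightarrow> degree (geometric_poly n) = n - 1"
  by (intro antisym degree_le le_degree) (auto simp: coeff_geometric_poly)

lemma map_poly_of_int_add:
  "map_poly (of_int :: int \<Rightarrow> 'a::comm_ring_1) (A + B) = map_poly of_int A + map_poly of_int B"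
  by (rule poly_eqI) (simp add: coeff_map_poly)

lemma map_poly_of_int_mult:
  "map_poly (of_int :: int \<Rightarrow> 'a::comm_ring_1) (A * B) = map_poly of_int A * map_poly of_int B"
  by (rule poly_eqI) (simp add: coeff_map_poly coeff_mult)

lemma poly_map_poly_of_int_geometric_poly:
  "poly (map_poly (of_int :: int \<Rightarrow> 'a::comm_ring_1) (geometric_poly n)) x = (\<Sum>k<n. x ^ k)"
proof -
  have "map_poly (of_int :: int \<Rightarrow> 'a) (geometric_poly n) = (\<Sum>k<n. monom 1 k)"
    by (rule poly_eqI) (simp add: coeff_map_poly coeff_geometric_poly coeff_sum coeff_monom)
  thus ?thesis by (simp add: poly_sum poly_monom)
qed

lemma coeff_geometric_poly_shift:
  "coeff (pcompose (geometric_poly n) [:1, 1:]) k = int (n choose Suc k)"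
proof -
  have shift: "[:0, 1:] * pcompose (geometric_poly n) [:1, 1:] = [:1, 1:] ^ n - 1"
  proof (rule poly_eq_poly_eq_iff[THEN iffD1], rule ext)
    fix x :: int
    have "poly (pcompose (geometric_poly n) [:1, 1:]) x = (\<Sum>k<n. (x + 1) ^ k)"
      using poly_map_poly_of_int_geometric_poly[of n "x + 1"]
      by (simp add: poly_pcompose add.commute)
    thus "poly ([:0, 1:] * pcompose (geometric_poly n) [:1, 1:]) x = poly ([:1, 1:] ^ n - 1) x"
      using power_diff_1_eq[of "x + 1" n] by (simp add: algebra_simps)
  qed
  have "coeff (pcompose (geometric_poly n) [:1, 1:]) k
      = coeff ([:0, 1:] * pcompose (geometric_poly n) [:1, 1:]) (Suc k)"
    by simp
  also have "\<dots> = coeff ([:1, 1:] ^ n) (Suc k)"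
    unfolding shift by simp
  also have "\<dots> = int (n choose Suc k)"
    by (cases "Suc k \<le> n") (simp_all add: coeff_linear_poly_power coeff_eq_0 degree_linear_power)
  finally show ?thesis .
qed

lemma eisenstein_criterion:
  fixes P G H :: "int poly"
  assumes p: "prime p" and PGH: "P = G * H"
    and lead: "\<not> p dvd lead_coeff P"
    and low: "\<And>i. i < degree P \<Longrightarrow> p dvd coeff P i"
    and const: "\<not> p\<^sup>2 dvd coeff P 0"
  shows "degree G = 0 \<or> degree H = 0"
proof (rule ccontr)
  assume "\<not> (degree G = 0 \<or> degree H = 0)"
  hence deg: "degree G \<ge> 1" "degree H \<ge> 1" by auto
  have "P \<noteq> 0" using lead by auto
  have no_factor: False
    if AB: "P = A * B" and dB: "degree B \<ge> 1" and A0: "p dvd coeff A 0" for A B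
  proof -
    have nz: "A \<noteq> 0" "B \<noteq> 0" using AB \<open>P \<noteq> 0\<close> by auto
    have dP: "degree P = degree A + degree B" using AB degree_mult_eq[OF nz] by simp
    have "\<not> p dvd lead_coeff A" using lead AB by (metis dvd_mult2 lead_coeff_mult)
    define r where "r = (LEAST i. \<not> p dvd coeff A i)"
    have Ar: "\<not> p dvd coeff A r" unfolding r_def by (rule LeastI) fact
    have "r \<le> degree A" unfolding r_def by (rule Least_le) fact
    hence "r < degree P" using dP dB by linarith
    have below: "p dvd coeff A i" if "i < r" for i
      using not_less_Least[OF that[unfolded r_def]] by blast
    have B0: "\<not> p dvd coeff B 0"
    proof
      assume "p dvd coeff B 0"
      hence "p\<^sup>2 dvd coeff A 0 * coeff B 0" using A0 by (simp add: power2_eq_square mult_dvd_mono)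
      thus False using const AB by (simp add: coeff_mult)
    qed
    have "coeff P r = coeff A r * coeff B 0 + (\<Sum>i<r. coeff A i * coeff B (r - i))"
      using AB by (simp add: coeff_mult lessThan_Suc_atMost[symmetric])
    moreover have "p dvd (\<Sum>i<r. coeff A i * coeff B (r - i))"
      by (intro dvd_sum) (simp add: below)
    ultimately have "p dvd coeff A r * coeff B 0"
      using low[OF \<open>r < degree P\<close>] by (metis dvd_add_left_iff add.commute)
    thus False using p Ar B0 prime_dvd_mult_iff by blast
  qed
  have "G \<noteq> 0" "H \<noteq> 0" using PGH \<open>P \<noteq> 0\<close> by auto
  hence "p dvd coeff G 0 * coeff H 0"
    using low[of 0] deg PGH by (simp add: coeff_mult degree_mult_eq)
  hence "p dvd coeff G 0 \<or> p dvd coeff H 0" using p prime_dvd_mult_iff by blast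
  thus False
    using no_factor[OF PGH deg(2)] no_factor[of H G] PGH deg(1) by (auto simp: mult.commute)
qed

lemma irreducible_geometric_poly:
  assumes p: "prime p"
  shows "irreducible (geometric_poly p)"
proof (rule irreducibleI)
  have p2: "p \<ge> 2" using p prime_ge_2_nat by blast
  have deg: "degree (geometric_poly p) = p - 1" using p2 by (simp add: degree_geometric_poly)
  have lead: "lead_coeff (geometric_poly p) = 1" using deg p2 by (simp add: coeff_geometric_poly)
  show "geometric_poly p \<noteq> 0" using lead by auto
  show "\<not> is_unit (geometric_poly p)" using deg p2 by (auto simp: is_unit_poly_iff)
  fix G H assume GH: "geometric_poly p = G * H"
  have lead_GH: "lead_coeff G * lead_coeff H = 1" using lead GH by (simp add: lead_coeff_mult)
  have units: "is_unit (lead_coeff G)" "is_unit (lead_coeff H)"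
    by (metis lead_GH dvd_triv_left, metis lead_GH dvd_triv_right)
  define shift where "shift Q = pcompose Q [:1, 1:]" for Q :: "int poly"
  have deg_shift: "degree (shift Q) = degree Q" for Q by (simp add: shift_def degree_pcompose)
  have coeff_shift: "coeff (shift (geometric_poly p)) k = int (p choose Suc k)" for k
    by (simp add: shift_def coeff_geometric_poly_shift)
  have "degree (shift G) = 0 \<or> degree (shift H) = 0"
  proof (rule eisenstein_criterion)
    show "prime (int p)" using p by simp
    show "shift (geometric_poly p) = shift G * shift H" by (simp add: shift_def GH pcompose_mult)
    show "\<not> int p dvd lead_coeff (shift (geometric_poly p))"
      using p2 by (simp add: deg_shift deg coeff_shift)
    show "int p dvd coeff (shift (geometric_poly p)) i"
      if "i < degree (shift (geometric_poly p))" for i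
      using that p by (simp add: deg_shift deg coeff_shift dvd_choose_prime)
    show "\<not> (int p)\<^sup>2 dvd coeff (shift (geometric_poly p)) 0"
      using p2 by (simp add: coeff_shift power2_eq_square)
  qed
  thus "is_unit G \<or> is_unit H"
    using units by (auto simp: deg_shift is_unit_poly_iff elim!: degree_eq_zeroE)
qed

lemma degree_le_if_irreducible_root:
  fixes z :: "'a::field_char_0"
  assumes P: "irreducible P" and Pz: "poly (map_poly of_int P) z = 0"
  shows "B \<noteq> 0 \<Longrightarrow> poly (map_poly of_int B) z = 0 \<Longrightarrow> degree P \<le> degree B"
proof (induction "degree B" arbitrary: B rule: less_induct)
  case less
  define r where "r = pseudo_mod P B"
  obtain c Q where "c \<noteq> 0" and division: "smult c P = B * Q + r"
    using pseudo_mod(1)[OF less.prems(1)] r_def by blast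
  show ?case
  proof (cases "r = 0")
    case False
    hence "degree r < degree B" using pseudo_mod(2)[OF less.prems(1)] r_def by blast
    moreover have "poly (map_poly of_int r) z = 0"
      using arg_cong[OF division, of "\<lambda>X. poly (map_poly of_int X) z"] Pz less.prems(2)
      by (simp add: map_poly_smult map_poly_of_int_add map_poly_of_int_mult)
    ultimately show ?thesis using less.hyps False by fastforce
  next
    case True
    have "prime_elem P" using P by (rule irreducible_imp_prime_elem)
    moreover have "P dvd B * Q" using division True by (metis add_0_right dvd_smult dvd_refl)
    ultimately consider "P dvd B" | "P dvd Q" using prime_elem_dvd_mult_iff by blast
    thus ?thesis
    proof cases
      case 1
      thus ?thesis using less.prems(1) by (rule dvd_imp_degree_le)
    next
      case 2
      then obtain Q' where "Q = P * Q'" by (elim dvdE)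
      hence "[:c:] * P = (B * Q') * P" using division True by (simp add: ac_simps)
      moreover have "P \<noteq> 0" using P by auto
      ultimately have "[:c:] = B * Q'" using mult_right_cancel[of P] by blast
      hence "degree B = 0" using \<open>c \<noteq> 0\<close>
        by (metis degree_mult_eq degree_pCons_0 add_is_0 mult_zero_right pCons_eq_0_iff)
      then obtain b where "B = [:b:]" by (elim degree_eq_zeroE)
      thus ?thesis using less.prems by (simp add: map_poly_pCons)
    qed
  qed
qed

lemma int_relation_root_of_unity_prime:
  fixes z :: "'a::field_char_0" and a :: "nat \<Rightarrow> int"
  assumes p: "prime p" and z: "z ^ p = 1" "z \<noteq> 1"
    and relation: "(\<Sum>k<p. of_int (a k) * z ^ k) = 0" and k: "k < p"
  shows "a k = a 0"
proof -
  have p2: "p \<ge> 2" using p prime_ge_2_nat by blast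
  have geometric_root: "(\<Sum>k<p. z ^ k) = 0"
    using power_diff_1_eq[of z p] z by simp
  define A where "A = (\<Sum>k<p. monom (a k - a (p - 1)) k)"
  have coeff_A: "coeff A i = (if i < p then a i - a (p - 1) else 0)" for i
    by (simp add: A_def coeff_sum coeff_monom)
  have "coeff A i = 0" if "i \<ge> p - 1" for i
    using that coeff_A[of i] by (cases "i = p - 1") auto
  hence "degree A < p - 1"
    using p2 degree_le[of "p - 2" A] by fastforce
  have "map_poly of_int A = (\<Sum>k<p. monom (of_int (a k - a (p - 1)) :: 'a) k)"
    by (rule poly_eqI) (simp add: coeff_map_poly coeff_A coeff_sum coeff_monom)
  hence "poly (map_poly of_int A) z
      = (\<Sum>k<p. of_int (a k) * z ^ k) - of_int (a (p - 1)) * (\<Sum>k<p. z ^ k)"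
    by (simp add: poly_sum poly_monom left_diff_distrib sum_subtractf sum_distrib_left)
  hence "poly (map_poly of_int A) z = 0" using relation geometric_root by simp
  moreover have "poly (map_poly of_int (geometric_poly p)) z = 0"
    using geometric_root by (simp add: poly_map_poly_of_int_geometric_poly)
  ultimately have "A = 0"
    using degree_le_if_irreducible_root[OF irreducible_geometric_poly[OF p]]
      \<open>degree A < p - 1\<close> p2 by (fastforce simp: degree_geometric_poly)
  thus ?thesis using coeff_A[of k] coeff_A[of 0] k p2 by (simp split: if_splits)
qed

lemma int_relation_root_of_unity_prime_monomial:
  fixes z :: "'a::field_char_0" and N :: "nat \<Rightarrow> int"
  assumes p: "prime p" and z: "z ^ p = 1" "z \<noteq> 1" and "t < p"
    and relation: "(\<Sum>i<p. of_int (N i) * z ^ i) = of_int R * z ^ t" and "k < p"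
  shows "int p * N k = (\<Sum>i<p. N i) - R + (if k = t then int p * R else 0)"
proof -
  define a where "a i = N i - (if i = t then R else 0)" for i
  have "(\<Sum>i<p. of_int (a i) * z ^ i) = (\<Sum>i<p. of_int (N i) * z ^ i) - of_int R * z ^ t"
    using \<open>t < p\<close> by (simp add: a_def left_diff_distrib sum_subtractf if_distrib[of of_int]
        if_distrib[of "\<lambda>c. c * z ^ _"] cong: if_cong)
  hence "(\<Sum>i<p. of_int (a i) * z ^ i) = 0" using relation by simp
  hence const: "a i = a 0" if "i < p" for i
    using int_relation_root_of_unity_prime[OF p z] that by simp
  have "(\<Sum>i<p. N i) - R = (\<Sum>i<p. a i)" using \<open>t < p\<close> by (simp add: a_def sum_subtractf)
  also have "\<dots> = (\<Sum>i<p. a k)"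
    by (intro sum.cong refl) (metis const lessThan_iff \<open>k < p\<close>)
  finally show ?thesis by (cases "k = t") (simp_all add: a_def algebra_simps)
qed

section \<open>The prime subfield of a finite field\<close>

lemma Fp_of_nat [simp]: "of_nat k \<in> Fp"
  by (simp add: Fp_def)

lemma Fp_0 [simp]: "0 \<in> Fp" and Fp_1 [simp]: "1 \<in> Fp"
  using Fp_of_nat[of 0] Fp_of_nat[of 1] by simp_all

lemma Fp_add [simp]: "x \<in> Fp \<Longrightarrow> y \<in> Fp \<Longrightarrow> x + y \<in> Fp"
  by (auto simp: Fp_def simp flip: of_nat_add)

lemma Fp_mult [simp]: "x \<in> Fp \<Longrightarrow> y \<in> Fp \<Longrightarrow> x * y \<in> Fp"
  by (auto simp: Fp_def simp flip: of_nat_mult)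

lemma Fp_sum [simp]: "(\<And>i. i \<in> A \<Longrightarrow> g i \<in> Fp) \<Longrightarrow> sum g A \<in> Fp"
  by (induction A rule: infinite_finite_induct) auto

lemma Fp_uminus [simp]:
  fixes x :: "'a::{finite,field}"
  assumes "x \<in> Fp"
  shows "- x \<in> Fp"
proof -
  obtain k where k: "x = of_nat k" using assms by (auto simp: Fp_def)
  have "(of_nat (CHAR('a) * k) :: 'a) = 0" by (simp add: of_nat_eq_0_iff_char_dvd)
  moreover have "CHAR('a) > 0" by (simp add: finite_imp_CHAR_pos)
  ultimately have "- x = of_nat (CHAR('a) * k - k)"
    using k by (simp add: of_nat_diff)
  thus ?thesis by simp
qed

lemma Fp_diff [simp]: "x \<in> Fp \<Longrightarrow> y \<in> Fp \<Longrightarrow> x - y \<in> (Fp :: 'a::{finite,field} set)"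
  using Fp_add[of x "- y"] by simp

lemma prime_CHAR_finite_field: "prime CHAR('a::{finite,field})"
  by (rule prime_CHAR_semidom) (simp add: finite_imp_CHAR_pos)

lemma CHAR_eq_if_card_eq_prime_power:
  assumes "prime p" and "card (UNIV :: 'a::{finite,field} set) = p ^ e"
  shows "CHAR('a) = p"
proof -
  have "CHAR('a) dvd p ^ e" using CHAR_dvd_CARD[where 'a = 'a] assms(2) by simp
  hence "CHAR('a) dvd p" using prime_CHAR_finite_field prime_dvd_power by blast
  thus ?thesis using prime_CHAR_finite_field assms(1) primes_dvd_imp_eq by blast
qed

lemma Fp_eq_image: "(Fp :: 'a::{finite,field} set) = of_nat ` {..<CHAR('a)}"
proof -
  have "(of_nat k :: 'a) = of_nat (k mod CHAR('a))" for k
    by (simp add: of_nat_eq_iff_cong_CHAR cong_def)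
  moreover have "k mod CHAR('a) \<in> {..<CHAR('a)}" for k
    by (simp add: finite_imp_CHAR_pos)
  ultimately have "(of_nat k :: 'a) \<in> of_nat ` {..<CHAR('a)}" for k
    by (rule image_eqI)
  thus ?thesis by (auto simp: Fp_def)
qed

lemma inj_on_of_nat_CHAR: "inj_on (of_nat :: nat \<Rightarrow> 'a::semiring_1_cancel) {..<CHAR('a)}"
  by (auto simp: inj_on_def of_nat_eq_iff_cong_CHAR cong_def)

lemma card_Fp: "card (Fp :: 'a::{finite,field} set) = CHAR('a)"
  by (simp add: Fp_eq_image card_image inj_on_of_nat_CHAR)

lemma power_CHAR_Fp:
  fixes x :: "'a::{finite,field}"
  assumes "x \<in> Fp"
  shows "x ^ CHAR('a) = x"
proof -
  have "(of_nat k :: 'a) ^ CHAR('a) = of_nat k" for k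
  proof (induction k)
    case (Suc k)
    have "(of_nat k + 1 :: 'a) ^ CHAR('a) = of_nat k ^ CHAR('a) + 1 ^ CHAR('a)"
      by (rule freshmans_dream[OF prime_CHAR_finite_field refl])
    thus ?case using Suc by (simp add: add.commute)
  qed (simp add: finite_imp_CHAR_pos)
  thus ?thesis using assms by (auto simp: Fp_def)
qed

lemma Fp_eq_fixed_points_Frobenius: "(Fp :: 'a::{finite,field} set) = {y. y ^ CHAR('a) = y}"
proof (rule card_subset_eq)
  show fixed: "Fp \<subseteq> {y::'a. y ^ CHAR('a) = y}" using power_CHAR_Fp by blast
  define P :: "'a poly" where "P = monom 1 CHAR('a) - monom 1 1"
  have "CHAR('a) \<ge> 2" using prime_CHAR_finite_field prime_ge_2_nat by blast
  hence "coeff P CHAR('a) = 1" "degree P \<le> CHAR('a)"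
    by (auto simp: P_def coeff_monom intro!: degree_le)
  moreover have "{y. y ^ CHAR('a) = y} = {y. poly P y = 0}" by (simp add: P_def poly_monom)
  ultimately have "card {y::'a. y ^ CHAR('a) = y} \<le> CHAR('a)"
    using card_poly_roots_bound[of P] by fastforce
  thus "card (Fp :: 'a set) = card {y::'a. y ^ CHAR('a) = y}"
    using card_mono[OF _ fixed] by (simp add: card_Fp)
qed simp

lemma Fp_inverse [simp]: "x \<in> Fp \<Longrightarrow> inverse x \<in> (Fp :: 'a::{finite,field} set)"
  by (simp add: Fp_eq_fixed_points_Frobenius power_inverse)

lemma Fp_divide [simp]: "x \<in> Fp \<Longrightarrow> y \<in> Fp \<Longrightarrow> x / y \<in> (Fp :: 'a::{finite,field} set)"
  by (simp add: divide_inverse)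

lemma toZ:
  fixes y :: "'a::{finite,field}"
  assumes "y \<in> Fp"
  shows toZ_less_CHAR: "toZ y < CHAR('a)" and of_nat_toZ: "of_nat (toZ y) = y"
proof -
  obtain k where k: "k < CHAR('a)" "y = of_nat k" using assms by (auto simp: Fp_eq_image)
  show "of_nat (toZ y) = y" unfolding toZ_def by (rule LeastI[of _ k]) (simp add: k)
  have "toZ y \<le> k" unfolding toZ_def by (rule Least_le) (simp add: k)
  thus "toZ y < CHAR('a)" using k by simp
qed

lemma toZ_of_nat: "k < CHAR('a) \<Longrightarrow> toZ (of_nat k :: 'a::{finite,field}) = k"
  using toZ[of "of_nat k :: 'a"] inj_on_of_nat_CHAR by (auto simp: inj_on_def)

lemma power_card_eq_self: "(x :: 'a::{finite,field}) ^ card (UNIV :: 'a set) = x"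
proof (cases "x = 0")
  case False
  let ?U = "UNIV - {0 :: 'a}"
  have "(\<Prod>y\<in>?U. x * y) = (\<Prod>y\<in>?U. y)"
    by (rule prod.reindex_bij_witness[of _ "\<lambda>y. y / x" "\<lambda>y. x * y"]) (use False in auto)
  hence "x ^ card ?U * (\<Prod>y\<in>?U. y) = 1 * (\<Prod>y\<in>?U. y)"
    by (simp only: prod.distrib prod_constant) simp
  moreover have "(\<Prod>y\<in>?U. y) \<noteq> 0" by simp
  ultimately have "x ^ card ?U = 1" by (rule mult_right_cancel[THEN iffD1, rotated])
  moreover have "card ?U = card (UNIV :: 'a set) - 1" by (rule card_Diff_singleton) simp
  moreover have "card (UNIV :: 'a set) > 0" by (simp add: finite_UNIV_card_ge_0)
  ultimately show ?thesis by (metis Suc_diff_1 power_Suc mult_1_right)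
qed (simp add: finite_UNIV_card_ge_0)

section \<open>The trace and a primitive element\<close>

lemma tr_add:
  fixes x y :: "'a::{finite,field}"
  assumes "CHAR('a) = p"
  shows "tr p e (x + y) = tr p e x + tr p e y"
  unfolding tr_def assms[symmetric]
  by (simp add: freshmans_dream'[OF prime_CHAR_finite_field refl] sum.distrib)

lemma power_CHAR_power_Fp:
  fixes x :: "'a::{finite,field}"
  assumes "x \<in> Fp"
  shows "x ^ (CHAR('a) ^ i) = x"
  by (induction i) (simp_all add: assms power_CHAR_Fp power_mult flip: power_Suc2)

lemma tr_smult:
  fixes x :: "'a::{finite,field}"
  assumes "CHAR('a) = p" and "a \<in> Fp"
  shows "tr p e (a * x) = a * tr p e x"
  unfolding tr_def assms(1)[symmetric]
  by (simp add: power_mult_distrib power_CHAR_power_Fp assms(2) sum_distrib_left)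

lemma tr_zero:
  assumes "CHAR('a::{finite,field}) = p"
  shows "tr p e (0 :: 'a) = 0"
  using tr_smult[OF assms, where a = 0 and x = 0] by simp

lemma tr_diff:
  fixes x y :: "'a::{finite,field}"
  assumes "CHAR('a) = p"
  shows "tr p e (x - y) = tr p e x - tr p e y"
  using tr_add[OF assms, where x = x and y = "- y"] tr_smult[OF assms, where a = "- 1" and x = y]
  by simp

lemma tr_lincomb:
  fixes y :: "'b \<Rightarrow> 'a::{finite,field}"
  assumes "CHAR('a) = p" and "\<And>i. i \<in> A \<Longrightarrow> c i \<in> Fp"
  shows "tr p e (\<Sum>i\<in>A. c i * y i) = (\<Sum>i\<in>A. c i * tr p e (y i))"
  using assms(2)
  by (induction A rule: infinite_finite_induct)
    (simp_all add: tr_add[OF assms(1)] tr_smult[OF assms(1)] tr_zero[OF assms(1)])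

lemma tr_in_Fp:
  fixes x :: "'a::{finite,field}"
  assumes char: "CHAR('a) = p" and card: "card (UNIV :: 'a set) = p ^ e"
  shows "tr p e x \<in> Fp"
proof -
  define g where "g i = x ^ (p ^ i)" for i
  have "g i ^ p = g (Suc i)" for i by (simp add: g_def power_mult[symmetric] mult.commute)
  hence "tr p e x ^ p = (\<Sum>i<e. g (Suc i))"
    unfolding tr_def g_def[symmetric]
    by (simp add: freshmans_dream_sum[OF prime_CHAR_finite_field char[symmetric]])
  also have "\<dots> = tr p e x"
  proof -
    have "g 0 + (\<Sum>i<e. g (Suc i)) = (\<Sum>i<e. g i) + g e" by (simp flip: sum.lessThan_Suc_shift)
    moreover have "g e = g 0" using power_card_eq_self[of x] by (simp add: g_def card)
    ultimately show ?thesis by (simp add: tr_def g_def)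
  qed
  finally show ?thesis by (simp add: Fp_eq_fixed_points_Frobenius char)
qed

lemma card_tr_eq_le:
  fixes c :: "'a::{finite,field}"
  assumes char: "CHAR('a) = p" and "e \<ge> 1"
  shows "card {x :: 'a. tr p e x = c} \<le> p ^ (e - 1)"
proof -
  define T :: "'a poly" where "T = (\<Sum>i<e. monom 1 (p ^ i)) - monom c 0"
  have p2: "p \<ge> 2" using prime_CHAR_finite_field[where 'a = 'a] char prime_ge_2_nat by blast
  have "coeff T (p ^ (e - 1)) = (\<Sum>i<e. if i = e - 1 then 1 else 0)"
    using p2 by (simp add: T_def coeff_sum coeff_monom power_inject_exp)
  hence "T \<noteq> 0" using \<open>e \<ge> 1\<close> by auto
  moreover have "degree T \<le> p ^ (e - 1)"
  proof (rule degree_le, intro allI impI)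
    fix k assume k: "p ^ (e - 1) < k"
    have "p ^ i \<noteq> k" if "i < e" for i
      using that k p2 power_increasing[of i "e - 1" p] by linarith
    thus "coeff T k = 0" using k by (auto simp: T_def coeff_sum coeff_monom intro!: sum.neutral)
  qed
  moreover have "{x. tr p e x = c} = {x. poly T x = 0}"
    by (simp add: T_def poly_sum poly_monom tr_def)
  ultimately show ?thesis using card_poly_roots_bound[of T] by fastforce
qed

lemma tr_not_identically_zero:
  assumes card: "card (UNIV :: 'a::{finite,field} set) = p ^ e" and char: "CHAR('a) = p"
  shows "\<exists>x :: 'a. tr p e x \<noteq> 0"
proof -
  have p2: "p \<ge> 2" using prime_CHAR_finite_field[where 'a = 'a] char prime_ge_2_nat by blast
  have "e \<noteq> 0"
  proof
    assume "e = 0"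
    hence "card (UNIV :: 'a set) = 1" using card by simp
    then obtain b where "UNIV = {b :: 'a}" by (rule card_1_singletonE)
    hence "(0 :: 'a) = 1" by (metis UNIV_I singletonD)
    thus False by simp
  qed
  hence "p ^ (e - 1) < p ^ e" using p2 by (intro power_strict_increasing) auto
  hence "{x :: 'a. tr p e x = 0} \<noteq> UNIV"
    using card_tr_eq_le[OF char, of e 0] \<open>e \<noteq> 0\<close> card by auto
  thus ?thesis by blast
qed

lemma primitive_element_order_ge:
  fixes \<beta> :: "'a::{finite,field}"
  assumes gen: "\<forall>x. x \<noteq> 0 \<longrightarrow> (\<exists>k. x = \<beta> ^ k)" and "0 < k" and "\<beta> ^ k = 1"
  shows "card (UNIV :: 'a set) - 1 \<le> k"
proof -
  have "UNIV - {0} \<subseteq> (\<lambda>j. \<beta> ^ j) ` {..<k}"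
  proof
    fix x :: 'a assume "x \<in> UNIV - {0}"
    then obtain n where "x = \<beta> ^ n" using gen by blast
    also have "\<dots> = \<beta> ^ (k * (n div k) + n mod k)" by simp
    also have "\<dots> = (\<beta> ^ k) ^ (n div k) * \<beta> ^ (n mod k)" by (simp only: power_add power_mult)
    finally have "x = \<beta> ^ (n mod k)" using assms by simp
    thus "x \<in> (\<lambda>j. \<beta> ^ j) ` {..<k}" using assms by auto
  qed
  hence "card (UNIV - {0 :: 'a}) \<le> card ((\<lambda>j. \<beta> ^ j) ` {..<k})" by (intro card_mono) auto
  also have "\<dots> \<le> k" using card_image_le[of "{..<k}" "\<lambda>j. \<beta> ^ j"] by simp
  finally have "card (UNIV - {0 :: 'a}) \<le> k" .
  thus ?thesis by (simp add: card_Diff_singleton)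
qed

lemma inj_on_conjugates_primitive_element:
  fixes \<beta> :: "'a::{finite,field}"
  assumes char: "CHAR('a) = p" and card: "card (UNIV :: 'a set) = p ^ e"
    and "\<beta> \<noteq> 0" and gen: "\<forall>x. x \<noteq> 0 \<longrightarrow> (\<exists>k. x = \<beta> ^ k)"
  shows "inj_on (\<lambda>i. \<beta> ^ (p ^ i)) {..<e}"
proof -
  have p2: "p \<ge> 2" using prime_CHAR_finite_field[where 'a = 'a] char prime_ge_2_nat by blast
  have distinct: "\<beta> ^ (p ^ i) \<noteq> \<beta> ^ (p ^ j)" if "i < j" "j < e" for i j
  proof
    assume eq: "\<beta> ^ (p ^ i) = \<beta> ^ (p ^ j)"
    have lt: "p ^ i < p ^ j" using that p2 by (intro power_strict_increasing) auto
    hence "\<beta> ^ (p ^ j) = \<beta> ^ (p ^ i) * \<beta> ^ (p ^ j - p ^ i)" by (simp flip: power_add)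
    hence "\<beta> ^ (p ^ j - p ^ i) = 1" using eq \<open>\<beta> \<noteq> 0\<close> by simp
    hence "p ^ e - 1 \<le> p ^ j - p ^ i" using primitive_element_order_ge[OF gen] lt card by simp
    moreover have "p ^ j \<le> p ^ (e - 1)" "p ^ (e - 1) < p ^ e"
      using that p2 by (auto intro: power_increasing power_strict_increasing)
    moreover have "p ^ i \<ge> 1" using p2 by simp
    ultimately show False using lt by linarith
  qed
  show ?thesis
    by (rule inj_onI, rule ccontr) (metis distinct lessThan_iff linorder_neqE_nat)
qed

lemma primitive_element_powers_independent:
  fixes \<beta> :: "'a::{finite,field}"
  assumes char: "CHAR('a) = p" and card: "card (UNIV :: 'a set) = p ^ e"
    and "\<beta> \<noteq> 0" and gen: "\<forall>x. x \<noteq> 0 \<longrightarrow> (\<exists>k. x = \<beta> ^ k)"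
    and c: "\<forall>j<e. c j \<in> Fp" and relation: "(\<Sum>j<e. c j * \<beta> ^ j) = 0" and "j < e"
  shows "c j = 0"
proof -
  define P where "P = (\<Sum>j<e. monom (c j) j)"
  have coeff_P: "coeff P k = (if k < e then c k else 0)" for k
    by (simp add: P_def coeff_sum coeff_monom)
  have "poly P (\<beta> ^ (p ^ i)) = (\<Sum>j<e. c j * \<beta> ^ j) ^ (p ^ i)" for i
  proof -
    have "c j * (\<beta> ^ (p ^ i)) ^ j = (c j * \<beta> ^ j) ^ (p ^ i)" if "j < e" for j
    proof -
      have "c j ^ (p ^ i) = c j" using power_CHAR_power_Fp[of "c j" i] c that char by simp
      thus ?thesis by (simp add: power_mult_distrib mult.commute flip: power_mult)
    qed
    hence "poly P (\<beta> ^ (p ^ i)) = (\<Sum>j<e. (c j * \<beta> ^ j) ^ (p ^ i))"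
      by (simp add: P_def poly_sum poly_monom)
    also have "\<dots> = (\<Sum>j<e. c j * \<beta> ^ j) ^ (p ^ i)"
      by (rule freshmans_dream_sum'[OF prime_CHAR_finite_field, symmetric]) (simp add: char)
    finally show ?thesis .
  qed
  moreover have "p > 0" using prime_CHAR_finite_field[where 'a = 'a] char prime_gt_0_nat by blast
  ultimately have "(\<lambda>i. \<beta> ^ (p ^ i)) ` {..<e} \<subseteq> {x. poly P x = 0}"
    using relation by auto
  hence "card ((\<lambda>i. \<beta> ^ (p ^ i)) ` {..<e}) \<le> card {x. poly P x = 0}" by (intro card_mono) auto
  moreover have "card ((\<lambda>i. \<beta> ^ (p ^ i)) ` {..<e}) = e"
    using inj_on_conjugates_primitive_element[OF assms(1-4)] by (simp add: card_image)
  moreover have "degree P \<le> e - 1" by (rule degree_le) (auto simp: coeff_P)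
  ultimately have "P = 0" using card_poly_roots_bound[of P] \<open>j < e\<close> by fastforce
  thus ?thesis using coeff_P[of j] \<open>j < e\<close> by simp
qed

lemma primitive_element_powers_span:
  fixes \<beta> :: "'a::{finite,field}"
  assumes char: "CHAR('a) = p" and card: "card (UNIV :: 'a set) = p ^ e"
    and "\<beta> \<noteq> 0" and gen: "\<forall>x. x \<noteq> 0 \<longrightarrow> (\<exists>k. x = \<beta> ^ k)"
  obtains c where "\<forall>j<e. c j \<in> Fp" and "y = (\<Sum>j<e. c j * \<beta> ^ j)"
proof -
  define V where "V = (PiE {..<e} (\<lambda>_. Fp) :: (nat \<Rightarrow> 'a) set)"
  define lincomb where "lincomb c = (\<Sum>j<e. c j * \<beta> ^ j)" for c
  have "inj_on lincomb V"
  proof (rule inj_onI)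
    fix c c' assume cc: "c \<in> V" "c' \<in> V" "lincomb c = lincomb c'"
    have "(\<Sum>j<e. (c j - c' j) * \<beta> ^ j) = 0"
      using cc(3) by (simp add: lincomb_def left_diff_distrib sum_subtractf)
    moreover have "\<forall>j<e. c j - c' j \<in> Fp" using cc(1,2) by (simp add: V_def PiE_iff)
    ultimately have "c j - c' j = 0" if "j < e" for j
      using primitive_element_powers_independent[OF assms, where c = "\<lambda>j. c j - c' j"] that
      by blast
    hence "c j = c' j" if "j < e" for j using that by simp
    thus "c = c'" using PiE_ext[of c "{..<e}" "\<lambda>_. Fp" c'] cc(1,2) by (simp add: V_def)
  qed
  moreover have "card V = card (UNIV :: 'a set)" by (simp add: V_def card_PiE card_Fp char card)
  ultimately have "card (lincomb ` V) = card (UNIV :: 'a set)" by (simp add: card_image)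
  hence "lincomb ` V = UNIV" by (rule card_eq_UNIV_imp_eq_UNIV[OF finite_UNIV])
  then obtain c where "c \<in> V" "y = lincomb c" by (metis UNIV_I imageE)
  show ?thesis
  proof (rule that)
    show "\<forall>j<e. c j \<in> Fp" using \<open>c \<in> V\<close> by (auto simp: V_def)
    show "y = (\<Sum>j<e. c j * \<beta> ^ j)" using \<open>y = lincomb c\<close> by (simp add: lincomb_def)
  qed
qed

lemma tr_nondegenerate:
  fixes \<beta> :: "'a::{finite,field}"
  assumes char: "CHAR('a) = p" and card: "card (UNIV :: 'a set) = p ^ e"
    and "\<beta> \<noteq> 0" and gen: "\<forall>x. x \<noteq> 0 \<longrightarrow> (\<exists>k. x = \<beta> ^ k)"
    and "x \<noteq> 0" and orth: "\<And>j. j < e \<Longrightarrow> tr p e (\<beta> ^ j * x) = 0"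
  shows False
proof -
  have vanish: "tr p e (y * x) = 0" for y
  proof -
    obtain c where c: "\<forall>j<e. c j \<in> Fp" "y = (\<Sum>j<e. c j * \<beta> ^ j)"
      using primitive_element_powers_span[OF assms(1-4)] by blast
    have "tr p e (y * x) = tr p e (\<Sum>j<e. c j * (\<beta> ^ j * x))"
      by (simp add: c(2) sum_distrib_right mult.assoc)
    also have "\<dots> = (\<Sum>j<e. c j * tr p e (\<beta> ^ j * x))" using c(1) by (intro tr_lincomb[OF char]) auto
    finally show ?thesis by (simp add: orth)
  qed
  have "tr p e z = 0" for z :: 'a using vanish[of "z / x"] \<open>x \<noteq> 0\<close> by simp
  thus False using tr_not_identically_zero[OF card char] by blast
qed

section \<open>Level sets of weakly regular bent functions\<close>

lemma zeta_power_self: "p > 0 \<Longrightarrow> zeta p ^ p = 1"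
  by (simp add: zeta_def DeMoivre)

lemma zeta_neq_1:
  assumes "p > 2"
  shows "zeta p \<noteq> 1"
proof -
  have "sin (2 * pi / real p) > 0"
    using assms by (intro sin_gt_zero) (simp_all add: field_simps)
  thus ?thesis by (auto simp: zeta_def complex_eq_iff)
qed

lemma Legendre_minus_one:
  assumes p: "prime p" "odd p"
  shows "Legendre (-1) (int p) = (if p mod 4 = 1 then 1 else -1)"
proof -
  have p3: "p \<ge> 3" using p prime_ge_2_nat[of p] by (cases "p = 2") auto
  have euler: "[Legendre (-1) (int p) = (-1) ^ ((p - 1) div 2)] (mod int p)"
    using euler_criterion[OF p(1), of "-1"] p3 by simp
  have "\<not> int p dvd -1" using p3 by simp
  hence "Legendre (-1) (int p) \<in> {1, -1}" by (auto simp: Legendre_def cong_0_iff)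
  moreover have "(-1 :: int) ^ ((p - 1) div 2) = (if p mod 4 = 1 then 1 else -1)"
  proof -
    have "even ((p - 1) div 2) \<longleftrightarrow> p mod 4 = 1" using p(2) by presburger
    thus ?thesis by (simp add: minus_one_power_iff)
  qed
  moreover have "\<not> [1 = -1] (mod int p)"
  proof
    assume "[1 = -1] (mod int p)"
    hence "int p dvd 2" by (simp add: cong_iff_dvd_diff)
    thus False using p3 by (auto dest: zdvd_imp_le)
  qed
  ultimately show ?thesis using euler by (auto simp: cong_sym_eq)
qed

lemma sqrt_pstar_power_even:
  assumes "prime p" "odd p" "even e"
  shows "sqrt_pstar p ^ e = of_int ((Legendre (-1) (int p) * int p) ^ (e div 2))"
proof -
  have "sqrt_pstar p ^ 2 = of_int (Legendre (-1) (int p) * int p)"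
    by (simp add: sqrt_pstar_def Legendre_minus_one[OF assms(1,2)] power2_eq_square
        algebra_simps flip: of_real_mult)
  moreover have "sqrt_pstar p ^ e = (sqrt_pstar p ^ 2) ^ (e div 2)"
    using assms(3) by (simp flip: power_mult)
  ultimately show ?thesis by simp
qed

lemma sum_over_level_sets:
  fixes g :: "'b::finite \<Rightarrow> 'a::{finite,field}" and h :: "nat \<Rightarrow> 'c::comm_semiring_1"
  assumes "\<forall>x. g x \<in> Fp"
  shows "(\<Sum>x\<in>UNIV. h (toZ (g x))) = (\<Sum>k<CHAR('a). of_nat (card {x. g x = of_nat k}) * h k)"
proof -
  have "(\<Sum>x\<in>UNIV. h (toZ (g x))) = (\<Sum>x\<in>UNIV. \<Sum>k<CHAR('a). if toZ (g x) = k then h k else 0)"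
    using toZ_less_CHAR assms by (intro sum.cong) auto
  also have "\<dots> = (\<Sum>k<CHAR('a). \<Sum>x\<in>UNIV. if toZ (g x) = k then h k else 0)"
    by (rule sum.swap)
  also have "\<dots> = (\<Sum>k<CHAR('a). of_nat (card {x. g x = of_nat k}) * h k)"
  proof (rule sum.cong)
    fix k assume k: "k \<in> {..<CHAR('a)}"
    have "toZ (g x) = k \<longleftrightarrow> g x = of_nat k" for x
      using of_nat_toZ[of "g x"] toZ_of_nat[of k] assms k by auto
    hence "{x. toZ (g x) = k} = {x. g x = of_nat k}" by simp
    thus "(\<Sum>x\<in>UNIV. if toZ (g x) = k then h k else 0) = of_nat (card {x. g x = of_nat k}) * h k"
      by (simp add: sum.If_cases)
  qed simp
  finally show ?thesis .
qed

lemma card_level_set_weakly_regular_bent: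
  fixes f fstar :: "'a::{finite,field} \<Rightarrow> 'a"
  assumes p: "prime p" "odd p" and e: "e \<ge> 2" "even e"
    and card: "card (UNIV :: 'a set) = p ^ e"
    and bent: "weakly_regular_bent p e f \<epsilon> fstar" and j: "j \<in> Fp"
  shows "int (card {x. f x - tr p e (b * x) = j})
         = int (p ^ (e - 1)) + \<epsilon> * Legendre (-1) (int p) ^ (e div 2) * int (p ^ (e div 2 - 1))
             * (if j = fstar b then int p - 1 else -1)"
proof -
  have char: "CHAR('a) = p" using CHAR_eq_if_card_eq_prime_power[OF p(1) card] .
  have p3: "p > 2" using p prime_ge_2_nat[of p] by (cases "p = 2") auto
  define s where "s = \<epsilon> * Legendre (-1) (int p) ^ (e div 2)"
  define w where "w = int (p ^ (e div 2 - 1))"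
  define N where "N k = int (card {x. f x - tr p e (b * x) = of_nat k})" for k
  define t where "t = toZ (fstar b)"
  have f_Fp: "\<forall>x. f x \<in> Fp" and "fstar b \<in> Fp"
    and walsh: "walsh p e f b = of_int \<epsilon> * sqrt_pstar p ^ e * zeta p ^ t"
    using bent by (auto simp: weakly_regular_bent_def t_def)
  hence t: "t < p" "of_nat t = fstar b" using toZ[of "fstar b"] char by (auto simp: t_def)
  have level_Fp: "\<forall>x. f x - tr p e (b * x) \<in> Fp" using f_Fp tr_in_Fp[OF char card] by simp
  have "(\<Sum>k<p. of_int (N k) * zeta p ^ k) = walsh p e f b"
    using sum_over_level_sets[OF level_Fp, of "\<lambda>k. zeta p ^ k"] char by (simp add: walsh_def N_def)
  also have "\<dots> = of_int (s * int p * w) * zeta p ^ t"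
    using walsh sqrt_pstar_power_even[OF p e(2)] e
    by (simp add: s_def w_def power_mult_distrib mult_ac flip: power_Suc)
  finally have relation: "(\<Sum>k<p. of_int (N k) * zeta p ^ k) = of_int (s * int p * w) * zeta p ^ t" .
  have "(\<Sum>k<p. N k) = int (p ^ e)"
    using sum_over_level_sets[OF level_Fp, of "\<lambda>_. 1 :: int"] char card by (simp add: N_def)
  also have "\<dots> = int p * int (p ^ (e - 1))" using e by (simp flip: power_Suc)
  finally have total: "(\<Sum>k<p. N k) = int p * int (p ^ (e - 1))" .
  obtain k where k: "k < p" "j = of_nat k" using j char by (auto simp: Fp_eq_image)
  have "k = t \<longleftrightarrow> j = fstar b"
    using k t inj_on_of_nat_CHAR[where 'a = 'a] char by (auto simp: inj_on_def)
  hence "int p * N k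
      = int p * (int (p ^ (e - 1)) + s * w * (if j = fstar b then int p - 1 else -1))"
    using int_relation_root_of_unity_prime_monomial[OF p(1) zeta_power_self zeta_neq_1[OF p3] t(1)
        relation k(1)] total p3
    by (simp add: algebra_simps)
  thus ?thesis using p3 by (simp add: N_def k(2) s_def w_def)
qed

lemma CHAR_minus_1_dvd_card_Fp_cone:
  fixes S :: "'a::{finite,field} set"
  assumes "0 \<notin> S" and closed: "\<And>a x. a \<in> Fp \<Longrightarrow> a \<noteq> 0 \<Longrightarrow> x \<in> S \<Longrightarrow> a * x \<in> S"
  shows "CHAR('a) - 1 dvd card S"
proof -
  define line where "line x = (\<lambda>a. a * x) ` (Fp - {0})" for x :: 'a
  have card_line: "card (line x) = CHAR('a) - 1" if "x \<noteq> 0" for x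
  proof -
    have "inj_on (\<lambda>a. a * x) (Fp - {0})" using that by (auto simp: inj_on_def)
    thus ?thesis by (simp add: line_def card_image card_Diff_singleton card_Fp)
  qed
  have line_eq: "line (b * x) = line x" if "b \<in> Fp" "b \<noteq> 0" for b x
  proof -
    have "(\<lambda>a. a * b) ` (Fp - {0}) = Fp - {0}"
    proof (intro equalityI subsetI)
      fix c :: 'a assume "c \<in> Fp - {0}"
      hence "c = (c / b) * b" "c / b \<in> Fp - {0}" using that by auto
      thus "c \<in> (\<lambda>a. a * b) ` (Fp - {0})" by blast
    qed (use that in auto)
    hence "(\<lambda>a. a * x) ` ((\<lambda>a. a * b) ` (Fp - {0})) = line x" by (simp add: line_def)
    thus ?thesis by (simp add: line_def image_image mult.assoc)
  qed
  have "x \<in> line x" for x unfolding line_def by (rule image_eqI[of _ _ 1]) auto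
  moreover have "line x \<subseteq> S" if "x \<in> S" for x using closed that by (auto simp: line_def)
  ultimately have S: "\<Union> (line ` S) = S" by blast
  have line_mem: "line z = line x" if "z \<in> line x" for z x
    using that line_eq by (auto simp: line_def)
  have disjoint: "\<forall>l1\<in>line ` S. \<forall>l2\<in>line ` S. l1 \<noteq> l2 \<longrightarrow> l1 \<inter> l2 = {}"
    using line_mem by blast
  have "\<forall>x\<in>S. card (line x) = CHAR('a) - 1"
    using card_line \<open>0 \<notin> S\<close> by (metis (full_types))
  hence "(CHAR('a) - 1) * card (line ` S) = card (\<Union> (line ` S))"
    using disjoint by (intro card_partition) auto
  hence "(CHAR('a) - 1) * card (line ` S) = card S" by (simp only: S)
  thus ?thesis by (metis dvd_triv_left)
qed

lemma weakly_regular_bent_sign: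
  assumes "prime p" "odd p" and "weakly_regular_bent p e f \<epsilon> fstar"
  shows "\<epsilon> * Legendre (-1) (int p) ^ k = 1 \<or> \<epsilon> * Legendre (-1) (int p) ^ k = -1"
proof -
  have "Legendre (-1) (int p) ^ k \<in> {1, -1}"
    by (simp add: Legendre_minus_one[OF assms(1,2)] minus_one_power_iff)
  thus ?thesis using assms(3) by (auto simp: weakly_regular_bent_def)
qed

lemma weakly_regular_bent_dual_zero:
  fixes f fstar :: "'a::{finite,field} \<Rightarrow> 'a"
  assumes p: "prime p" "odd p" and e: "e \<ge> 2" "even e"
    and card: "card (UNIV :: 'a set) = p ^ e"
    and bent: "weakly_regular_bent p e f \<epsilon> fstar"
    and "f 0 = 0" and homogeneous: "\<forall>a\<in>Fp - {0}. \<forall>x. f (a * x) = a ^ h * f x"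
  shows "fstar 0 = 0"
proof (rule ccontr)
  assume "fstar 0 \<noteq> 0"
  have char: "CHAR('a) = p" using CHAR_eq_if_card_eq_prime_power[OF p(1) card] .
  have p3: "p > 2" using p prime_ge_2_nat[of p] by (cases "p = 2") auto
  define s where "s = \<epsilon> * Legendre (-1) (int p) ^ (e div 2)"
  have s: "s = 1 \<or> s = -1" unfolding s_def by (rule weakly_regular_bent_sign[OF p bent])
  have "CHAR('a) - 1 dvd card ({x. f x = 0} - {0})"
    using homogeneous by (intro CHAR_minus_1_dvd_card_Fp_cone) auto
  hence "int (p - 1) dvd int (card ({x. f x = 0} - {0}))" by (simp only: int_dvd_int_iff char)
  moreover have "card {x. f x = 0} = card ({x. f x = 0} - {0}) + 1"
    using \<open>f 0 = 0\<close> card.remove[of "{x. f x = 0}" 0] by simp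
  ultimately have zeros: "int p - 1 dvd int (card {x. f x = 0}) - 1" using p3
    by (simp add: of_nat_diff)
  have "int (card {x. f x = 0}) = int p ^ (e - 1) - s * int p ^ (e div 2 - 1)"
    using card_level_set_weakly_regular_bent[OF p e card bent, of 0 0] \<open>fstar 0 \<noteq> 0\<close>
      tr_zero[OF char]
    by (simp add: s_def)
  hence "s = (int p ^ (e - 1) - 1) - s * (int p ^ (e div 2 - 1) - 1)
             - (int (card {x. f x = 0}) - 1)"
    by (simp add: algebra_simps)
  moreover have "int p - 1 dvd int p ^ k - 1" for k
    using power_diff_1_eq[of "int p" k] by simp
  ultimately have "int p - 1 dvd s"
    by (metis dvd_diff dvd_mult zeros)
  thus False using s p3 by auto
qed

section \<open>Linear codes with a systematic generator matrix\<close>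

definition encode :: "nat \<Rightarrow> nat \<Rightarrow> (nat \<Rightarrow> nat \<Rightarrow> 'a::field) \<Rightarrow> (nat \<Rightarrow> 'a) \<Rightarrow> nat \<Rightarrow> 'a" where
  "encode m n G a = (\<lambda>j. if j < n then (\<Sum>r<m. a r * G r j) else 0)"

lemma row_code_eq: "row_code m n G = {encode m n G a | a. \<forall>r<m. a r \<in> Fp}"
  by (simp add: row_code_def encode_def)

lemma encode_systematic:
  assumes "m \<le> n" and sys: "\<And>r j. r < m \<Longrightarrow> j < m \<Longrightarrow> G r j = (if r = j then 1 else 0)"
    and "j < m"
  shows "encode m n G a j = a j"
proof -
  have "encode m n G a j = (\<Sum>r<m. a r * G r j)" using assms by (simp add: encode_def)
  also have "\<dots> = (\<Sum>r<m. if r = j then a r else 0)"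
    using \<open>j < m\<close> by (intro sum.cong) (simp_all add: sys)
  finally show ?thesis using \<open>j < m\<close> by simp
qed

lemma encode_in_Fp:
  assumes "\<forall>r<m. a r \<in> Fp" and "\<And>r j. G r j \<in> Fp"
  shows "encode m n G a j \<in> (Fp :: 'a::{finite,field} set)"
  using assms by (auto simp: encode_def intro!: Fp_sum Fp_mult)

lemma code_paramsI:
  assumes "\<And>c. c \<in> C \<Longrightarrow> (\<forall>j<n. c j \<in> Fp) \<and> (\<forall>j\<ge>n. c j = 0)" and "card C = p ^ k"
    and lower: "\<And>c. c \<in> C \<Longrightarrow> c \<noteq> (\<lambda>_. 0) \<Longrightarrow> d \<le> hweight n c"
    and witness: "c0 \<in> C" "c0 \<noteq> (\<lambda>_. 0)" "hweight n c0 = d"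
  shows "code_params p C n k d"
proof -
  have "hweight n c \<le> n" for c :: "nat \<Rightarrow> 'a"
    unfolding hweight_def using card_mono[of "{..<n}" "{i. i < n \<and> c i \<noteq> 0}"] by auto
  hence "hweight n ` (C - {\<lambda>_. 0}) \<subseteq> {..n}" by auto
  hence "finite (hweight n ` (C - {\<lambda>_. 0}))" by (rule finite_subset) simp
  hence "d = Min (hweight n ` (C - {\<lambda>_. 0}))"
    using lower witness by (intro Min_eqI[symmetric]) auto
  thus ?thesis using assms(1,2) by (simp add: code_params_def)
qed

lemma card_row_code_systematic:
  fixes G :: "nat \<Rightarrow> nat \<Rightarrow> 'a::{finite,field}"
  assumes "m \<le> n" and sys: "\<And>r j. r < m \<Longrightarrow> j < m \<Longrightarrow> G r j = (if r = j then 1 else 0)"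
  shows "card (row_code m n G) = CHAR('a) ^ m"
proof -
  define V where "V = (PiE {..<m} (\<lambda>_. Fp) :: (nat \<Rightarrow> 'a) set)"
  have "row_code m n G = encode m n G ` V"
  proof (intro equalityI subsetI)
    fix c assume "c \<in> row_code m n G"
    then obtain a where a: "\<forall>r<m. a r \<in> Fp" "c = encode m n G a" by (auto simp: row_code_eq)
    hence "restrict a {..<m} \<in> V" "c = encode m n G (restrict a {..<m})"
      by (auto simp: V_def encode_def)
    thus "c \<in> encode m n G ` V" by blast
  qed (auto simp: row_code_eq V_def)
  moreover have "inj_on (encode m n G) V"
  proof (rule inj_onI)
    fix a a' assume "a \<in> V" "a' \<in> V" "encode m n G a = encode m n G a'"
    moreover have "a j = a' j" if "j < m" for j
      using encode_systematic[OF assms that, of a] encode_systematic[OF assms that, of a']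
        \<open>encode m n G a = encode m n G a'\<close> by simp
    ultimately show "a = a'" using PiE_ext[of a "{..<m}" "\<lambda>_. Fp" a'] by (simp add: V_def)
  qed
  ultimately show ?thesis by (simp add: card_image V_def card_PiE card_Fp)
qed

lemma code_params_row_code_systematic:
  fixes G :: "nat \<Rightarrow> nat \<Rightarrow> 'a::{finite,field}"
  assumes "m \<le> n" and sys: "\<And>r j. r < m \<Longrightarrow> j < m \<Longrightarrow> G r j = (if r = j then 1 else 0)"
    and G_Fp: "\<And>r j. G r j \<in> Fp"
    and lower: "\<And>a. \<forall>r<m. a r \<in> Fp \<Longrightarrow> \<exists>r<m. a r \<noteq> 0 \<Longrightarrow> D \<le> hweight n (encode m n G a)"
    and witness: "\<forall>r<m. msg r \<in> Fp" "pos < m" "msg pos \<noteq> 0" "hweight n (encode m n G msg) = D"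
  shows "code_params CHAR('a) (row_code m n G) n m D"
proof (rule code_paramsI)
  show "(\<forall>j<n. c j \<in> Fp) \<and> (\<forall>j\<ge>n. c j = 0)" if "c \<in> row_code m n G" for c
    using that encode_in_Fp[where G = G, OF _ G_Fp] by (auto simp: row_code_eq encode_def)
  show "card (row_code m n G) = CHAR('a) ^ m"
    using card_row_code_systematic[OF assms(1) sys] .
  show "D \<le> hweight n c" if "c \<in> row_code m n G" "c \<noteq> (\<lambda>_. 0)" for c
  proof -
    obtain a where a: "\<forall>r<m. a r \<in> Fp" and c: "c = encode m n G a"
      using \<open>c \<in> row_code m n G\<close> by (auto simp: row_code_eq)
    have "\<exists>r<m. a r \<noteq> 0"
      using \<open>c \<noteq> (\<lambda>_. 0)\<close> by (auto simp: c encode_def)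
    thus ?thesis using lower[OF a] c by simp
  qed
  show "encode m n G msg \<in> row_code m n G" using witness(1) by (auto simp: row_code_eq)
  show "encode m n G msg \<noteq> (\<lambda>_. 0)"
    using encode_systematic[OF assms(1) sys witness(2), of msg] witness(3) by auto
qed fact

lemma mem_dual_row_code_iff:
  "v \<in> dual_code n (row_code m n G) \<longleftrightarrow>
     (\<forall>j<n. v j \<in> Fp) \<and> (\<forall>j\<ge>n. v j = 0) \<and> (\<forall>r<m. (\<Sum>j<n. v j * G r j) = 0)"
proof -
  have orth: "(\<Sum>j<n. v j * encode m n G a j) = (\<Sum>r<m. a r * (\<Sum>j<n. v j * G r j))" for a
  proof -
    have "(\<Sum>j<n. v j * encode m n G a j) = (\<Sum>j<n. \<Sum>r<m. a r * (v j * G r j))"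
      by (intro sum.cong refl) (simp add: encode_def sum_distrib_left mult_ac)
    also have "\<dots> = (\<Sum>r<m. \<Sum>j<n. a r * (v j * G r j))" by (rule sum.swap)
    finally show ?thesis by (simp add: sum_distrib_left)
  qed
  show ?thesis
  proof
    assume dual: "v \<in> dual_code n (row_code m n G)"
    have "(\<Sum>j<n. v j * G r j) = 0" if "r < m" for r
    proof -
      have "encode m n G (\<lambda>r'. if r' = r then 1 else 0) \<in> row_code m n G"
        by (auto simp: row_code_eq)
      hence "(\<Sum>j<n. v j * encode m n G (\<lambda>r'. if r' = r then 1 else 0) j) = 0"
        using dual by (simp add: dual_code_def)
      hence "(\<Sum>r'<m. if r' = r then (\<Sum>j<n. v j * G r' j) else 0) = 0"
        by (simp only: orth if_distrib[of "\<lambda>x. x * _"] mult_1 mult_zero_left)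
      thus ?thesis using that by simp
    qed
    thus "(\<forall>j<n. v j \<in> Fp) \<and> (\<forall>j\<ge>n. v j = 0) \<and> (\<forall>r<m. (\<Sum>j<n. v j * G r j) = 0)"
      using dual by (simp add: dual_code_def)
  qed (auto simp: dual_code_def row_code_eq orth)
qed

lemma sum_lessThan_add_split:
  fixes g :: "nat \<Rightarrow> 'a::comm_monoid_add"
  shows "(\<Sum>j<m + k. g j) = (\<Sum>j<m. g j) + (\<Sum>i<k. g (m + i))"
  by (induction k) (simp_all add: add_ac)

lemma card_lessThan_add_split:
  fixes m k :: nat
  shows "card {j. j < m + k \<and> P j} = card {j. j < m \<and> P j} + card {i. i < k \<and> P (m + i)}"
proof -
  have "(\<Sum>j<m + k. of_bool (P j)) = (\<Sum>j<m. of_bool (P j)) + (\<Sum>i<k. of_bool (P (m + i)) :: nat)"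
    by (rule sum_lessThan_add_split[where g = "\<lambda>j. of_bool (P j)"])
  thus ?thesis by (simp add: lessThan_def Collect_conj_eq)
qed

lemma mem_dual_row_code_systematic_iff:
  assumes sys: "\<And>r j. r < m \<Longrightarrow> j < m \<Longrightarrow> G r j = (if r = j then 1 else 0)"
  shows "v \<in> dual_code (m + k) (row_code m (m + k) G) \<longleftrightarrow>
     (\<forall>j<m + k. v j \<in> Fp) \<and> (\<forall>j\<ge>m + k. v j = 0) \<and>
     (\<forall>r<m. v r = - (\<Sum>i<k. G r (m + i) * v (m + i)))"
proof -
  have "(\<Sum>j<m + k. v j * G r j) = v r + (\<Sum>i<k. G r (m + i) * v (m + i))" if "r < m" for r
  proof -
    have "(\<Sum>j<m. v j * G r j) = (\<Sum>j<m. if j = r then v j else 0)"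
      using that by (intro sum.cong) (simp_all add: sys)
    thus ?thesis using that by (simp add: sum_lessThan_add_split mult.commute)
  qed
  thus ?thesis by (simp add: mem_dual_row_code_iff eq_neg_iff_add_eq_0)
qed

lemma card_dual_row_code_systematic:
  fixes G :: "nat \<Rightarrow> nat \<Rightarrow> 'a::{finite,field}"
  assumes "m \<le> n" and sys: "\<And>r j. r < m \<Longrightarrow> j < m \<Longrightarrow> G r j = (if r = j then 1 else 0)"
    and G_Fp: "\<And>r j. G r j \<in> Fp"
  shows "card (dual_code n (row_code m n G)) = CHAR('a) ^ (n - m)"
proof -
  define k where "k = n - m"
  have n: "n = m + k" using \<open>m \<le> n\<close> by (simp add: k_def)
  define V where "V = (PiE {..<k} (\<lambda>_. Fp) :: (nat \<Rightarrow> 'a) set)"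
  define extend where "extend u j =
    (if j < m then - (\<Sum>i<k. G j (m + i) * u i) else if j < n then u (j - m) else 0)" for u j
  note dual = mem_dual_row_code_systematic_iff[where G = G and m = m and k = k, OF sys, folded n]
  have extend_high: "extend u (m + i) = u i" if "i < k" for u i
    using that by (simp add: extend_def n)
  have "dual_code n (row_code m n G) = extend ` V"
  proof (intro equalityI subsetI)
    fix v assume "v \<in> dual_code n (row_code m n G)"
    hence v: "\<forall>j<n. v j \<in> Fp" "\<forall>j\<ge>n. v j = 0" "\<forall>r<m. v r = - (\<Sum>i<k. G r (m + i) * v (m + i))"
      using dual by auto
    define u where "u = restrict (\<lambda>i. v (m + i)) {..<k}"
    have "u \<in> V" using v(1) by (auto simp: V_def u_def n)
    moreover have "extend u = v"
    proof
      fix j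
      have "(\<Sum>i<k. G j (m + i) * u i) = (\<Sum>i<k. G j (m + i) * v (m + i))" by (simp add: u_def)
      moreover have "u (j - m) = v j" if "m \<le> j" "j < n" using that by (auto simp: u_def n)
      ultimately show "extend u j = v j" using v by (simp add: extend_def)
    qed
    ultimately show "v \<in> extend ` V" by blast
  next
    fix v assume "v \<in> extend ` V"
    then obtain u where u: "u \<in> V" "v = extend u" by blast
    hence "\<forall>i<k. u i \<in> Fp" by (auto simp: V_def)
    hence "\<forall>j<n. v j \<in> Fp" using G_Fp
      by (auto simp: u(2) extend_def n intro!: Fp_uminus Fp_sum Fp_mult)
    moreover have "\<forall>j\<ge>n. v j = 0" using \<open>m \<le> n\<close> by (simp add: u(2) extend_def)
    moreover have "(\<Sum>i<k. G r (m + i) * v (m + i)) = (\<Sum>i<k. G r (m + i) * u i)" for r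
      using u extend_high by simp
    hence "\<forall>r<m. v r = - (\<Sum>i<k. G r (m + i) * v (m + i))" by (simp add: u(2) extend_def)
    ultimately show "v \<in> dual_code n (row_code m n G)" by (simp only: dual)
  qed
  moreover have "inj_on extend V"
  proof (rule inj_onI)
    fix u u' assume "u \<in> V" "u' \<in> V" "extend u = extend u'"
    hence "u i = u' i" if "i < k" for i using extend_high[OF that] by metis
    thus "u = u'" using PiE_ext[of u "{..<k}" "\<lambda>_. Fp" u'] \<open>u \<in> V\<close> \<open>u' \<in> V\<close> by (simp add: V_def)
  qed
  ultimately show ?thesis by (simp add: card_image V_def card_PiE card_Fp k_def)
qed

lemma hweight_dual_row_code_ge_3:
  fixes G :: "nat \<Rightarrow> nat \<Rightarrow> 'a::field"
  assumes nonzero_column: "\<And>j. j < n \<Longrightarrow> \<exists>r<m. G r j \<noteq> 0"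
    and nonproportional: "\<And>j k c. j < n \<Longrightarrow> k < n \<Longrightarrow> j \<noteq> k \<Longrightarrow> \<exists>r<m. G r j \<noteq> c * G r k"
    and v: "v \<in> dual_code n (row_code m n G)" "v \<noteq> (\<lambda>_. 0)"
  shows "3 \<le> hweight n v"
proof (rule ccontr)
  define supp where "supp = {j. j < n \<and> v j \<noteq> 0}"
  assume "\<not> 3 \<le> hweight n v"
  hence small: "card supp \<le> 2" by (simp add: hweight_def supp_def)
  have v_high: "\<forall>j\<ge>n. v j = 0" and v_orth: "\<forall>r<m. (\<Sum>j<n. v j * G r j) = 0"
    using v(1) by (simp_all add: mem_dual_row_code_iff)
  have relation: "(\<Sum>j\<in>supp. v j * G r j) = 0" if "r < m" for r
  proof -
    have "(\<Sum>j<n. v j * G r j) = (\<Sum>j\<in>supp. v j * G r j)"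
      by (rule sum.mono_neutral_right) (auto simp: supp_def)
    thus ?thesis using v_orth that by simp
  qed
  obtain j where j: "j \<in> supp"
    using v v_high by (metis (mono_tags, lifting) mem_Collect_eq not_le supp_def)
  show False
  proof (cases "supp = {j}")
    case True
    have "v j \<noteq> 0" using j by (simp add: supp_def)
    hence "G r j = 0" if "r < m" for r using relation[OF that] True by simp
    thus False using nonzero_column j by (auto simp: supp_def)
  next
    case False
    then obtain k where k: "k \<in> supp" "k \<noteq> j" using j by blast
    have "{j, k} \<subseteq> supp" using j k by blast
    moreover have "finite supp" by (simp add: supp_def)
    ultimately have "supp = {j, k}" using small k(2) card_subset_eq[of supp "{j, k}"] card_mono
      by (metis card_2_iff le_antisym)
    moreover have "v j \<noteq> 0" using j by (simp add: supp_def)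
    ultimately have "G r j = (- v k / v j) * G r k" if "r < m" for r
      using relation[OF that] k(2) by (simp add: field_simps add_eq_0_iff)
    thus False using nonproportional[of j k "- v k / v j"] j k by (auto simp: supp_def)
  qed
qed

lemma sphere_packing_rules_out_distance_5:
  assumes "3 \<le> p" and "k < n" and small: "p ^ (n - k) \<le> k * k"
  shows "sphere_packing_rules_out p n k 5"
proof -
  have "0 < p ^ (n - k)" using assms(1) by simp
  hence "1 \<le> k" using small by (cases k) auto
  have "p ^ (n - k) \<le> n * (n - 1)"
    using small \<open>k < n\<close> mult_mono[of k n k "n - 1"] by linarith
  also have "\<dots> = 2 * (n choose 2)"
  proof -
    have "even (n * (n - 1))" by (cases "even n") auto
    thus ?thesis by (simp add: choose_two)
  qed
  also have "\<dots> < 4 * (n choose 2)" using \<open>1 \<le> k\<close> \<open>k < n\<close> by (simp add: zero_less_binomial_iff)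
  also have "\<dots> \<le> (p - 1) ^ 2 * (n choose 2)"
    using power_mono[of 2 "p - 1" 2] assms(1) by (intro mult_right_mono) auto
  also have "\<dots> \<le> (\<Sum>i\<le>2. (n choose i) * (p - 1) ^ i)" by (simp add: numeral_2_eq_2)
  finally have "p ^ k * p ^ (n - k) < p ^ k * (\<Sum>i\<le>2. (n choose i) * (p - 1) ^ i)"
    using assms(1) by simp
  moreover have "p ^ n = p ^ k * p ^ (n - k)" using \<open>k < n\<close> by (simp flip: power_add)
  ultimately show ?thesis by (simp add: sphere_packing_rules_out_def)
qed

section \<open>The code generated by G2'\<close>

locale bent_function_code =
  fixes p e :: nat and f :: "'a::{finite,field} \<Rightarrow> 'a" and \<epsilon> :: int
    and fstar :: "'a \<Rightarrow> 'a" and \<beta> :: 'a and d :: "nat \<Rightarrow> 'a"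
  assumes prime: "prime p" and odd: "odd p" and e: "e \<ge> 2" "even e"
    and card: "card (UNIV :: 'a set) = p ^ e"
    and RF: "in_RF p e f"
    and bent: "weakly_regular_bent p e f \<epsilon> fstar"
    and primitive: "\<beta> \<noteq> 0" "\<forall>x::'a. x \<noteq> 0 \<longrightarrow> (\<exists>k::nat. x = \<beta> ^ k)"
    and d: "bij_betw d {0..<p ^ e} UNIV" and d_last: "d (p ^ e - 1) = 0"
begin

abbreviation "G \<equiv> G2' p e f \<beta> d"
abbreviation "n \<equiv> p ^ e + e + 2"
definition walsh_sign :: int where "walsh_sign = \<epsilon> * Legendre (-1) (int p) ^ (e div 2)"
abbreviation "w \<equiv> p ^ (e div 2 - 1)"

text \<open>The two minimum distances of the theorem, in integer form.\<close>
definition min_weight :: int where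
  "min_weight = int (p ^ e) - int (p ^ (e - 1)) + 1
                  - (if walsh_sign = 1 then (int p - 1) * int w - 1 else int w)"

lemma char: "CHAR('a) = p"
  using CHAR_eq_if_card_eq_prime_power[OF prime card] .

lemma p_gt_2: "p > 2"
  using prime odd prime_ge_2_nat[of p] by (cases "p = 2") auto

lemma f_in_Fp [simp]: "f x \<in> Fp"
  using bent by (simp add: weakly_regular_bent_def)

lemma f_0: "f 0 = 0"
  using RF by (simp add: in_RF_def)

lemma fstar_0: "fstar 0 = 0"
proof -
  obtain h where "\<forall>a\<in>Fp - {0}. \<forall>x. f (a * x) = a ^ h * f x" using RF by (auto simp: in_RF_def)
  thus ?thesis using weakly_regular_bent_dual_zero[OF prime odd e card bent f_0] by blast
qed

lemma G_systematic: "r < e + 2 \<Longrightarrow> j < e + 2 \<Longrightarrow> G r j = (if r = j then 1 else 0)"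
  by (simp add: G2'_def)

lemma G_in_Fp: "G r j \<in> Fp"
  by (simp add: G2'_def Let_def tr_in_Fp[OF char card])

lemma G_column:
  "i < p ^ e \<Longrightarrow> G r (e + 2 + i) =
     (if r = 0 then 1 else if r = 1 then f (d i) + 1 else tr p e (\<beta> ^ (r - 2) * d i))"
  by (simp add: G2'_def Let_def)

text \<open>The codeword with message \<open>a\<close> has the entry \<open>entry a x\<close> at the position of \<open>x\<close>; in
  the notation of the paper it is \<open>a\<^sub>1 f(x) + Tr(b x) + (a\<^sub>0 + a\<^sub>1)\<close> with
  \<open>b = trace_coeff a\<close>.\<close>
definition trace_coeff :: "(nat \<Rightarrow> 'a) \<Rightarrow> 'a" where
  "trace_coeff a = (\<Sum>r<e. a (r + 2) * \<beta> ^ r)"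

definition entry :: "(nat \<Rightarrow> 'a) \<Rightarrow> 'a \<Rightarrow> 'a" where
  "entry a x = a 0 + a 1 * (f x + 1) + tr p e (trace_coeff a * x)"

lemma encode_G_column:
  assumes a: "\<forall>r<e + 2. a r \<in> Fp" and "i < p ^ e"
  shows "encode (e + 2) n G a (e + 2 + i) = entry a (d i)"
proof -
  have "encode (e + 2) n G a (e + 2 + i) = (\<Sum>r<e + 2. a r * G r (e + 2 + i))"
    using \<open>i < p ^ e\<close> by (simp add: encode_def)
  also have "\<dots> = a 0 + a 1 * (f (d i) + 1) + (\<Sum>r<e. a (r + 2) * tr p e (\<beta> ^ r * d i))"
    using \<open>i < p ^ e\<close>
    by (simp add: G2'_def Let_def sum.lessThan_Suc_shift add_ac del: sum.lessThan_Suc)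
  also have "(\<Sum>r<e. a (r + 2) * tr p e (\<beta> ^ r * d i)) = tr p e (\<Sum>r<e. a (r + 2) * (\<beta> ^ r * d i))"
    using a by (intro tr_lincomb[OF char, symmetric]) auto
  also have "\<dots> = tr p e (trace_coeff a * d i)"
    by (simp add: trace_coeff_def sum_distrib_right mult.assoc)
  finally show ?thesis by (simp add: entry_def)
qed

lemma card_d_indices: "card {i. i < p ^ e \<and> P (d i)} = card {x. P x}"
proof -
  have "bij_betw d {i. i < p ^ e \<and> P (d i)} {x. P x}"
    using d by (auto simp: bij_betw_def inj_on_def atLeast0LessThan image_iff)
  thus ?thesis by (rule bij_betw_same_card)
qed

lemma hweight_encode_G:
  assumes a: "\<forall>r<e + 2. a r \<in> Fp"
  shows "hweight n (encode (e + 2) n G a) = card {r. r < e + 2 \<and> a r \<noteq> 0} + card {x. entry a x \<noteq> 0}"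
proof -
  let ?c = "encode (e + 2) n G a"
  have "hweight n ?c = card {j. j < e + 2 \<and> ?c j \<noteq> 0} + card {i. i < p ^ e \<and> ?c (e + 2 + i) \<noteq> 0}"
    unfolding hweight_def using card_lessThan_add_split[of "e + 2" "p ^ e"] by (simp add: add_ac)
  also have "{j. j < e + 2 \<and> ?c j \<noteq> 0} = {r. r < e + 2 \<and> a r \<noteq> 0}"
    using encode_systematic[OF _ G_systematic, of "e + 2" n] by auto
  also have "{i. i < p ^ e \<and> ?c (e + 2 + i) \<noteq> 0} = {i. i < p ^ e \<and> entry a (d i) \<noteq> 0}"
    using encode_G_column[OF a] by auto
  finally show ?thesis using card_d_indices[of "\<lambda>x. entry a x \<noteq> 0"] by simp
qed

lemma trace_coeff_eq_0_iff:
  assumes a: "\<forall>r<e + 2. a r \<in> Fp"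
  shows "trace_coeff a = 0 \<longleftrightarrow> (\<forall>r<e. a (r + 2) = 0)"
proof
  assume "trace_coeff a = 0"
  moreover have "\<forall>r<e. a (r + 2) \<in> Fp" using a by simp
  ultimately show "\<forall>r<e. a (r + 2) = 0"
    using primitive_element_powers_independent[OF char card primitive, where c = "\<lambda>r. a (r + 2)"]
    unfolding trace_coeff_def by blast
qed (simp add: trace_coeff_def)

lemma card_zeros_entry_a1_nonzero:
  assumes a: "\<forall>r<e + 2. a r \<in> Fp" and "a 1 \<noteq> 0"
  shows "int (card {x. entry a x = 0}) = int (p ^ (e - 1)) + walsh_sign * int w
           * (if - (a 0 + a 1) / a 1 = fstar (- trace_coeff a / a 1) then int p - 1 else -1)"
proof -
  define b where "b = - trace_coeff a / a 1"
  define j where "j = - (a 0 + a 1) / a 1"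
  have "j \<in> Fp" using a by (simp add: j_def)
  have "tr p e (b * x) = - inverse (a 1) * tr p e (trace_coeff a * x)" for x
    using tr_smult[OF char, where a = "- inverse (a 1)" and x = "trace_coeff a * x"] a
    by (simp add: b_def divide_inverse mult_ac)
  hence trb: "a 1 * tr p e (b * x) = - tr p e (trace_coeff a * x)" for x
    using \<open>a 1 \<noteq> 0\<close> by simp
  have aj: "a 1 * j = - (a 0 + a 1)" using \<open>a 1 \<noteq> 0\<close> by (simp add: j_def)
  have "entry a x = a 1 * (f x - tr p e (b * x) - j)" for x
  proof -
    have "a 1 * (f x - tr p e (b * x) - j) = a 1 * f x - a 1 * tr p e (b * x) - a 1 * j"
      by (simp add: right_diff_distrib)
    also have "\<dots> = a 1 * f x + tr p e (trace_coeff a * x) + (a 0 + a 1)" by (simp only: trb aj) simp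
    finally show ?thesis by (simp add: entry_def algebra_simps)
  qed
  hence "{x. entry a x = 0} = {x. f x - tr p e (b * x) = j}" using \<open>a 1 \<noteq> 0\<close> by auto
  thus ?thesis
    using card_level_set_weakly_regular_bent[OF prime odd e card bent \<open>j \<in> Fp\<close>, of b]
    by (simp add: b_def j_def walsh_sign_def)
qed

lemma card_zeros_entry_a1_zero:
  assumes a: "\<forall>r<e + 2. a r \<in> Fp" and "a 1 = 0" and "r0 < e + 2" "a r0 \<noteq> 0"
  shows "card {x. entry a x = 0} \<le> p ^ (e - 1)"
proof (cases "trace_coeff a = 0")
  case False
  have "{x. entry a x = 0} = (\<lambda>y. y / trace_coeff a) ` {y. tr p e y = - a 0}"
  proof (intro equalityI subsetI)
    fix x assume "x \<in> {x. entry a x = 0}"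
    hence "tr p e (trace_coeff a * x) = - a 0"
      using \<open>a 1 = 0\<close> by (simp add: entry_def eq_neg_iff_add_eq_0 add.commute)
    moreover have "x = (trace_coeff a * x) / trace_coeff a" using False by simp
    ultimately show "x \<in> (\<lambda>y. y / trace_coeff a) ` {y. tr p e y = - a 0}" by blast
  qed (use \<open>a 1 = 0\<close> False in \<open>auto simp: entry_def\<close>)
  hence "card {x. entry a x = 0} \<le> card {y. tr p e y = - a 0}" by (simp add: card_image_le)
  also have "\<dots> \<le> p ^ (e - 1)" using card_tr_eq_le[OF char] e by simp
  finally show ?thesis .
next
  case True
  hence high: "\<forall>r<e. a (r + 2) = 0" using trace_coeff_eq_0_iff[OF a] by simp
  have "a 0 \<noteq> 0"
  proof
    assume "a 0 = 0"
    have "a r = 0" if "r < e + 2" for r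
    proof (cases "r < 2")
      case True
      thus ?thesis using \<open>a 0 = 0\<close> \<open>a 1 = 0\<close> by (auto simp: less_2_cases_iff)
    next
      case False
      hence "r = (r - 2) + 2" "r - 2 < e" using that by auto
      thus ?thesis using high by metis
    qed
    thus False using \<open>r0 < e + 2\<close> \<open>a r0 \<noteq> 0\<close> by blast
  qed
  hence "{x. entry a x = 0} = {}" using True \<open>a 1 = 0\<close> by (simp add: entry_def tr_zero[OF char])
  thus ?thesis by simp
qed

lemma walsh_sign_cases: "walsh_sign = 1 \<or> walsh_sign = -1"
  unfolding walsh_sign_def by (rule weakly_regular_bent_sign[OF prime odd bent])

lemma w_le: "w \<le> p ^ (e - 1)"
  using p_gt_2 e by (intro power_increasing) auto

lemma w_bounds: "1 \<le> int w" "int w \<le> int (p ^ (e - 1))" "2 * int w \<le> (int p - 1) * int w"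
proof -
  show "1 \<le> int w" using p_gt_2 by simp
  show "int w \<le> int (p ^ (e - 1))" using w_le by (simp only: of_nat_le_iff)
  show "2 * int w \<le> (int p - 1) * int w" using p_gt_2 by (intro mult_right_mono) auto
qed

lemma power_e_split: "p ^ e = p ^ (e - 1) + (p - 1) * p ^ (e - 1)"
proof -
  have "p ^ e = p * p ^ (e - 1)" using e by (simp flip: power_Suc)
  thus ?thesis using p_gt_2 by (cases p) simp_all
qed

lemma int_card_nonzeros_entry:
  "int (card {x. entry a x \<noteq> 0}) = int (p ^ e) - int (card {x. entry a x = 0})"
proof -
  have "card {x. entry a x \<noteq> 0} = card (UNIV :: 'a set) - card {x. entry a x = 0}"
    by (simp add: Collect_neg_eq Compl_eq_Diff_UNIV card_Diff_subset)
  moreover have "card {x. entry a x = 0} \<le> card (UNIV :: 'a set)" by (rule card_mono) simp_all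
  ultimately show ?thesis by (simp add: card of_nat_diff)
qed

lemma card_zeros_entry_a1_nonzero_le:
  assumes a: "\<forall>r<e + 2. a r \<in> Fp" and "a 1 \<noteq> 0"
  shows "int (card {x. entry a x = 0})
           \<le> int (p ^ (e - 1)) + (if walsh_sign = 1 then (int p - 1) * int w else int w)"
proof -
  define W where "W = int w"
  define M where "M = (int p - 1) * int w"
  have "int (card {x. entry a x = 0}) = int (p ^ (e - 1))
      + walsh_sign * (if - (a 0 + a 1) / a 1 = fstar (- trace_coeff a / a 1) then M else - W)"
    using card_zeros_entry_a1_nonzero[OF assms] unfolding M_def W_def by (simp add: algebra_simps)
  moreover have "1 \<le> W" "2 * W \<le> M" using w_bounds unfolding W_def M_def by simp_all
  ultimately have
    "int (card {x. entry a x = 0}) \<le> int (p ^ (e - 1)) + (if walsh_sign = 1 then M else W)"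
    using walsh_sign_cases by (auto split: if_splits)
  thus ?thesis by (simp only: M_def W_def)
qed

lemma card_zeros_entry_only_a1:
  assumes a: "\<forall>r<e + 2. a r \<in> Fp" and "a 1 \<noteq> 0" and only: "\<forall>r<e + 2. r \<noteq> 1 \<longrightarrow> a r = 0"
  shows "int (card {x. entry a x = 0}) = int (p ^ (e - 1)) - walsh_sign * int w"
proof -
  have "\<forall>r<e. a (r + 2) = 0" and "a 0 = 0" using only by simp_all
  hence "trace_coeff a = 0" and "- (a 0 + a 1) / a 1 \<noteq> fstar (- trace_coeff a / a 1)"
    using \<open>a 1 \<noteq> 0\<close> fstar_0 by (simp_all add: trace_coeff_def)
  thus ?thesis using card_zeros_entry_a1_nonzero[OF a \<open>a 1 \<noteq> 0\<close>] by simp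
qed

lemma hweight_encode_G_lower_bound:
  assumes a: "\<forall>r<e + 2. a r \<in> Fp" and "r0 < e + 2" "a r0 \<noteq> 0"
  shows "min_weight \<le> int (hweight n (encode (e + 2) n G a))"
proof -
  define W where "W = int w"
  define M where "M = (int p - 1) * int w"
  define Q where "Q = int (p ^ (e - 1))"
  define support where "support = {r. r < e + 2 \<and> a r \<noteq> 0}"
  define zeros where "zeros = int (card {x. entry a x = 0})"
  have "int (hweight n (encode (e + 2) n G a)) = int (card support) + int (p ^ e) - zeros"
    using hweight_encode_G[OF a] int_card_nonzeros_entry[of a] by (simp add: support_def zeros_def)
  moreover have "min_weight = int (p ^ e) - Q + 1 - (if walsh_sign = 1 then M - 1 else W)"
    by (simp add: min_weight_def Q_def M_def W_def)
  moreover have "r0 \<in> support" using assms by (simp add: support_def)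
  hence "1 \<le> card support" by (simp add: support_def card_gt_0_iff Suc_le_eq) blast
  moreover have "1 \<le> W" "2 * W \<le> M" using w_bounds unfolding W_def M_def by simp_all
  moreover have "zeros - int (card support) \<le> Q - 1 + (if walsh_sign = 1 then M - 1 else W)"
  proof (cases "a 1 = 0")
    case True
    have "card {x. entry a x = 0} \<le> p ^ (e - 1)"
      by (rule card_zeros_entry_a1_zero[OF a True assms(2,3)])
    hence "zeros \<le> Q" unfolding zeros_def Q_def by (simp only: of_nat_le_iff)
    thus ?thesis using \<open>1 \<le> card support\<close> \<open>2 * W \<le> M\<close> \<open>1 \<le> W\<close> by auto
  next
    case False
    show ?thesis
    proof (cases "\<forall>r<e + 2. r \<noteq> 1 \<longrightarrow> a r = 0")
      case True
      hence "zeros = Q - walsh_sign * W"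
        using card_zeros_entry_only_a1[OF a False] by (simp add: zeros_def Q_def W_def)
      thus ?thesis using walsh_sign_cases \<open>1 \<le> card support\<close> \<open>2 * W \<le> M\<close> \<open>1 \<le> W\<close> by auto
    next
      case False
      then obtain r where "r < e + 2" "r \<noteq> 1" "a r \<noteq> 0" by blast
      hence "{1, r} \<subseteq> support" using \<open>a 1 \<noteq> 0\<close> by (auto simp: support_def)
      hence "2 \<le> card support"
        using card_mono[of support "{1, r}"] \<open>r \<noteq> 1\<close> by (simp add: support_def)
      moreover have "zeros \<le> Q + (if walsh_sign = 1 then M else W)"
        using card_zeros_entry_a1_nonzero_le[OF a \<open>a 1 \<noteq> 0\<close>]
        unfolding zeros_def Q_def M_def W_def .
      ultimately show ?thesis by auto
    qed
  qed
  ultimately show ?thesis by linarith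
qed

lemma hweight_encode_G_attained:
  obtains a where "\<forall>r<e + 2. a r \<in> Fp" and "a 1 \<noteq> 0"
    and "int (hweight n (encode (e + 2) n G a)) = min_weight"
proof -
  define a :: "nat \<Rightarrow> 'a" where "a r = (if r = 1 then 1 else
    if r = 0 \<and> walsh_sign = 1 then -1 else 0)" for r
  have a: "\<forall>r<e + 2. a r \<in> Fp" and "a 1 \<noteq> 0" by (simp_all add: a_def)
  have "trace_coeff a = 0" by (simp add: trace_coeff_def a_def)
  hence "- (a 0 + a 1) / a 1 = fstar (- trace_coeff a / a 1) \<longleftrightarrow> walsh_sign = 1"
    using fstar_0 by (simp add: a_def)
  hence "int (card {x. entry a x = 0})
      = int (p ^ (e - 1)) + (if walsh_sign = 1 then (int p - 1) * int w else int w)"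
    using card_zeros_entry_a1_nonzero[OF a \<open>a 1 \<noteq> 0\<close>] walsh_sign_cases by auto
  moreover have "{r. r < e + 2 \<and> a r \<noteq> 0} = (if walsh_sign = 1 then {0, 1} else {1})"
    by (auto simp: a_def)
  ultimately show ?thesis
    using that[OF a \<open>a 1 \<noteq> 0\<close>] hweight_encode_G[OF a] int_card_nonzeros_entry[of a]
    by (auto simp: min_weight_def)
qed

lemma code_params_row_code_G:
  assumes D: "int D = min_weight"
  shows "code_params p (row_code (e + 2) n G) n (e + 2) D"
proof -
  obtain a0 where a0: "\<forall>r<e + 2. a0 r \<in> Fp" "a0 1 \<noteq> 0"
    and weight_a0: "int (hweight n (encode (e + 2) n G a0)) = int D"
    using hweight_encode_G_attained D by metis
  have "D \<le> hweight n (encode (e + 2) n G a)"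
    if a: "\<forall>r<e + 2. a r \<in> Fp" and nonzero: "\<exists>r<e + 2. a r \<noteq> 0" for a
  proof -
    obtain r0 where "r0 < e + 2" "a r0 \<noteq> 0" using nonzero by blast
    hence "int D \<le> int (hweight n (encode (e + 2) n G a))"
      using hweight_encode_G_lower_bound[OF a] D by simp
    thus ?thesis by (simp only: of_nat_le_iff)
  qed
  moreover have "hweight n (encode (e + 2) n G a0) = D" using weight_a0
    by (simp only: of_nat_eq_iff)
  ultimately have "code_params CHAR('a) (row_code (e + 2) n G) n (e + 2) D"
    using code_params_row_code_systematic[where pos = 1 and msg = a0, OF _ G_systematic G_in_Fp] a0
    by simp
  thus ?thesis by (simp only: char)
qed

lemma eq_if_traces_eq:
  assumes "\<forall>r<e. tr p e (\<beta> ^ r * x) = tr p e (\<beta> ^ r * y)"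
  shows "x = y"
proof (rule ccontr)
  assume "x \<noteq> y"
  moreover have "tr p e (\<beta> ^ r * (x - y)) = 0" if "r < e" for r
    using assms that by (simp add: right_diff_distrib tr_diff[OF char])
  ultimately show False using tr_nondegenerate[OF char card primitive, of "x - y"] by simp
qed

lemma column_ne_unit_0:
  assumes "f x + 1 = 0" and "\<forall>r<e. tr p e (\<beta> ^ r * x) = 0"
  shows False
proof -
  have "x = 0" using eq_if_traces_eq[of x 0] assms(2) by (simp add: tr_zero[OF char])
  thus False using assms(1) f_0 by simp
qed

lemma G_column_nonzero:
  assumes "j < n"
  shows "\<exists>r<e + 2. G r j \<noteq> 0"
proof (cases "j < e + 2")
  case True
  thus ?thesis using G_systematic[of j j] by auto
next
  case False
  thus ?thesis using assms by (intro exI[of _ 0]) (simp add: G2'_def)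
qed

lemma unit_column_not_multiple:
  assumes "j < e + 2" "i < p ^ e" and multiple: "\<forall>r<e + 2. G r j = c * G r (e + 2 + i)"
  shows False
proof -
  have "c = (if j = 0 then 1 else 0)"
    using multiple[rule_format, of 0] assms(1,2) by (simp add: G2'_def)
  show False
  proof (cases "j = 0")
    case True
    hence "f (d i) + 1 = 0"
      using multiple[rule_format, of 1] \<open>c = _\<close> \<open>i < p ^ e\<close> by (simp add: G2'_def)
    moreover have "tr p e (\<beta> ^ r * d i) = 0" if "r < e" for r
      using multiple[rule_format, of "r + 2"] that \<open>c = _\<close> True \<open>i < p ^ e\<close>
      by (simp add: G2'_def Let_def)
    ultimately show False using column_ne_unit_0 by blast
  next
    case False
    thus False using multiple[rule_format, of j] \<open>c = _\<close> \<open>j < e + 2\<close> by (simp add: G2'_def)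
  qed
qed

lemma point_column_not_multiple:
  assumes "k < e + 2" "i < p ^ e" and multiple: "\<forall>r<e + 2. G r (e + 2 + i) = c * G r k"
  shows False
proof -
  have "k = 0" "c = 1"
    using multiple[rule_format, of 0] assms(1,2) by (simp_all add: G2'_def split: if_splits)
  hence "f (d i) + 1 = 0" using multiple[rule_format, of 1] \<open>i < p ^ e\<close> by (simp add: G2'_def)
  moreover have "tr p e (\<beta> ^ r * d i) = 0" if "r < e" for r
    using multiple[rule_format, of "r + 2"] that \<open>k = 0\<close> \<open>i < p ^ e\<close> by (simp add: G2'_def Let_def)
  ultimately show False using column_ne_unit_0 by blast
qed

lemma G_columns_nonproportional:
  assumes "j < n" "k < n" "j \<noteq> k"
  shows "\<exists>r<e + 2. G r j \<noteq> c * G r k"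
proof (rule ccontr)
  assume "\<not> (\<exists>r<e + 2. G r j \<noteq> c * G r k)"
  hence multiple: "\<forall>r<e + 2. G r j = c * G r k" by auto
  have point: "\<exists>i<p ^ e. l = e + 2 + i" if "\<not> l < e + 2" "l < n" for l
    using that by (intro exI[of _ "l - (e + 2)"]) auto
  show False
  proof (cases "j < e + 2"; cases "k < e + 2")
    assume "j < e + 2" "k < e + 2"
    thus False using multiple[rule_format, of j] \<open>j \<noteq> k\<close> by (simp add: G2'_def)
  next
    assume "j < e + 2" "\<not> k < e + 2"
    thus False using point \<open>k < n\<close> multiple unit_column_not_multiple by blast
  next
    assume "\<not> j < e + 2" "k < e + 2"
    thus False using point \<open>j < n\<close> multiple point_column_not_multiple by blast
  next
    assume "\<not> j < e + 2" "\<not> k < e + 2"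
    then obtain i i' where i: "i < p ^ e" "j = e + 2 + i" and i': "i' < p ^ e" "k = e + 2 + i'"
      using point \<open>j < n\<close> \<open>k < n\<close> by metis
    have "c = 1" using multiple[rule_format, of 0] i i' by (simp add: G2'_def)
    have "tr p e (\<beta> ^ r * d i) = tr p e (\<beta> ^ r * d i')" if "r < e" for r
      using multiple[rule_format, of "r + 2"] that \<open>c = 1\<close> i i' by (simp add: G2'_def Let_def)
    hence "d i = d i'" using eq_if_traces_eq by blast
    hence "i = i'" using d i i' by (auto simp: bij_betw_def inj_on_def)
    thus False using i i' \<open>j \<noteq> k\<close> by simp
  qed
qed

lemma code_params_dual_code_G: "code_params p (dual_code n (row_code (e + 2) n G)) n (p ^ e) 3"
proof -
  define last where "last = e + 2 + (p ^ e - 1)"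
  define v :: "nat \<Rightarrow> 'a" where "v j = (if j = 0 \<or> j = 1 then -1 else
    if j = last then 1 else 0)" for j
  have q: "p ^ e - 1 < p ^ e" using p_gt_2 by simp
  have last: "last < n" "2 \<le> last" using q by (simp_all add: last_def)
  have "G r last = (if r = 0 \<or> r = 1 then 1 else 0)" for r
    using G_column[OF q, of r] d_last f_0 by (simp add: last_def tr_zero[OF char])
  hence "(\<Sum>j<n. v j * G r j) = 0" if "r < e + 2" for r
  proof -
    have "(\<Sum>j<n. v j * G r j) = (\<Sum>j\<in>{0, 1, last}. v j * G r j)"
      using last by (intro sum.mono_neutral_right) (auto simp: v_def)
    thus ?thesis using last that \<open>G r last = _\<close> by (simp add: v_def G_systematic)
  qed
  hence v_dual: "v \<in> dual_code n (row_code (e + 2) n G)"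
    using last by (auto simp: mem_dual_row_code_iff v_def)
  have "{j. j < n \<and> v j \<noteq> 0} = {0, 1, last}" using last by (auto simp: v_def)
  hence "hweight n v = 3" using last by (simp add: hweight_def)
  show ?thesis
  proof (rule code_paramsI)
    show "(\<forall>j<n. c j \<in> Fp) \<and> (\<forall>j\<ge>n. c j = 0)" if "c \<in> dual_code n (row_code (e + 2) n G)" for c
      using that by (simp add: dual_code_def)
    show "card (dual_code n (row_code (e + 2) n G)) = p ^ p ^ e"
      using card_dual_row_code_systematic[OF _ G_systematic G_in_Fp] char by simp
    show "3 \<le> hweight n c" if "c \<in> dual_code n (row_code (e + 2) n G)" "c \<noteq> (\<lambda>_. 0)" for c
      using hweight_dual_row_code_ge_3[OF G_column_nonzero G_columns_nonproportional that] by blast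
    show "v \<noteq> (\<lambda>_. 0)" by (metis v_def neg_equal_0_iff_equal zero_neq_one)
  qed fact+
qed

lemma int_min_distance_sign_1:
  "int (p ^ e - p ^ (e - 1) - (p - 1) * w + 2)
    = int (p ^ e) - int (p ^ (e - 1)) + 1 - ((int p - 1) * int w - 1)"
proof -
  have "(p - 1) * w \<le> (p - 1) * p ^ (e - 1)" using w_le by (intro mult_left_mono) auto
  thus ?thesis using p_gt_2 power_e_split by (simp add: of_nat_diff)
qed

lemma int_min_distance_sign_minus_1:
  "int (p ^ e - p ^ (e - 1) - w + 1) = int (p ^ e) - int (p ^ (e - 1)) + 1 - int w"
proof -
  have "p ^ (e - 1) \<le> (p - 1) * p ^ (e - 1)" using p_gt_2 by simp
  hence "w \<le> (p - 1) * p ^ (e - 1)" using w_le by linarith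
  thus ?thesis using power_e_split by (simp add: of_nat_diff)
qed

lemma sphere_packing_dual: "sphere_packing_rules_out p n (p ^ e) 5"
proof (rule sphere_packing_rules_out_distance_5)
  have "p ^ (e + 2) \<le> p ^ (e + e)" using p_gt_2 e by (intro power_increasing) auto
  thus "p ^ (n - p ^ e) \<le> p ^ e * p ^ e" by (simp add: power_add add.commute)
qed (use p_gt_2 in simp_all)

end

theorem theorem4p4:
  fixes p e :: nat and f :: "'a::{finite,field} \<Rightarrow> 'a" and \<epsilon> :: int
    and fstar :: "'a \<Rightarrow> 'a" and \<beta> :: 'a and d :: "nat \<Rightarrow> 'a"
  assumes "prime p" and "odd p" and "e \<ge> 2" and "even e"
    and "card (UNIV::'a set) = p ^ e"
    and "in_RF p e f"
    and "weakly_regular_bent p e f \<epsilon> fstar"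
    and "\<beta> \<noteq> 0" and "\<forall>x::'a. x \<noteq> 0 \<longrightarrow> (\<exists>k::nat. x = \<beta> ^ k)"
    and "bij_betw d {0..<p ^ e} UNIV" and "d (p ^ e - 1) = 0"
  shows "(\<epsilon> * Legendre (-1) (int p) ^ (e div 2) = 1 \<longrightarrow>
            code_params p (row_code (e + 2) (p ^ e + e + 2) (G2' p e f \<beta> d))
              (p ^ e + e + 2) (e + 2) (p ^ e - p ^ (e - 1) - (p - 1) * p ^ (e div 2 - 1) + 2))
       \<and> (\<epsilon> * Legendre (-1) (int p) ^ (e div 2) = -1 \<longrightarrow>
            code_params p (row_code (e + 2) (p ^ e + e + 2) (G2' p e f \<beta> d))
              (p ^ e + e + 2) (e + 2) (p ^ e - p ^ (e - 1) - p ^ (e div 2 - 1) + 1))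
       \<and> code_params p (dual_code (p ^ e + e + 2) (row_code (e + 2) (p ^ e + e + 2) (G2' p e f \<beta> d)))
              (p ^ e + e + 2) (p ^ e) 3
       \<and> sphere_packing_rules_out p (p ^ e + e + 2) (p ^ e) (3 + 2)"
proof -
  interpret bent_function_code p e f \<epsilon> fstar \<beta> d
    using assms by unfold_locales
  have "walsh_sign = 1 \<Longrightarrow> code_params p (row_code (e + 2) n G) n (e + 2)
      (p ^ e - p ^ (e - 1) - (p - 1) * w + 2)"
    by (rule code_params_row_code_G) (use int_min_distance_sign_1 in \<open>simp add: min_weight_def\<close>)
  moreover have "walsh_sign = -1 \<Longrightarrow> code_params p (row_code (e + 2) n G) n (e + 2)
      (p ^ e - p ^ (e - 1) - w + 1)"
    by (rule code_params_row_code_G)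
      (use int_min_distance_sign_minus_1 in \<open>simp add: min_weight_def\<close>)
  ultimately show ?thesis
    using code_params_dual_code_G sphere_packing_dual by (simp add: walsh_sign_def)
qed

end
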